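(* Let $R\subseteq S$ be as in the context, let $n=n_1+\cdots+n_\ell$, and let $\mathcal{C}\subseteq S^n$ be any code (linear or not) such that $k=\log_{|S|}|\mathcal{C}|$ is a positive integer. Then $\mathcal{C}$ is MSRD over $R$ for the length partition $n=n_1+\cdots+n_\ell$ if and only if, for all invertible matrices $A_i\in R^{n_i\times n_i}$ ($i=1,\ldots,\ell$), the code $\mathcal{C}\,{\rm Diag}(A_1,\ldots,A_\ell)=\{\mathbf{c}\,{\rm Diag}(A_1,\ldots,A_\ell):\mathbf{c}\in\mathcal{C}\}$ is MDS.
   Context: $R$ is a finite commutative chain ring with maximal ideal $\mathfrak{m}$; $S=R[x]/(h)$ with $h\in R[x]$ monic of degree $m$ irreducible modulo $\mathfrak{m}$, a free $R$-module of rank $m$. Rank: for $\mathbf{u}\in S^s$, fix an $R$-basis $\alpha_1,\ldots,\alpha_m$ of $S$ and write $\mathbf{u}=\sum_{i=1}^m\alpha_i(c_{i,1},\ldots,c_{i,s})$ with $c_{i,j}\in R$; ${\rm rk}(\mathbf{u})$ is the number of nonzero diagonal entries in the Smith normal form of $(c_{i,j})\in R^{m\times s}$. For $\mathbf{c}=(\mathbf{c}^{(1)},\ldots,\mathbf{c}^{(\ell)})\in S^n$ with $\mathbf{c}^{(i)}\in S^{n_i}$, ${\rm wt}_{SR}(\mathbf{c})=\sum_i{\rm rk}(\mathbf{c}^{(i)})$ and ${\rm d}_{SR}(\mathcal{C})$ is the minimum of ${\rm wt}_{SR}(\mathbf{c}-\mathbf{d})$ over distinct $\mathbf{c},\mathbf{d}\in\mathcal{C}$.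 $\mathcal{C}$ is MSRD if $k$ is a positive integer and ${\rm d}_{SR}(\mathcal{C})=n-k+1$. A code $\mathcal{D}\subseteq S^n$ with $\log_{|S|}|\mathcal{D}|=k$ is MDS if its minimum Hamming distance equals $n-k+1$. *)

theory Defs
  imports "HOL-Computational_Algebra.Polynomial"
begin

definition r_ideal :: "'r::comm_ring_1 set \<Rightarrow> bool" where
  "r_ideal I \<longleftrightarrow> 0 \<in> I \<and> (\<forall>a\<in>I. \<forall>b\<in>I. a + b \<in> I) \<and> (\<forall>r. \<forall>a\<in>I. r * a \<in> I)"

definition maximal_r_ideal :: "'r::comm_ring_1 set \<Rightarrow> bool" where
  "maximal_r_ideal M \<longleftrightarrow> r_ideal M \<and> M \<noteq> UNIV \<and>
     (\<forall>J. r_ideal J \<and> M \<subseteq> J \<longrightarrow> J = M \<or> J = UNIV)"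

definition chain_ring :: "'r::comm_ring_1 itself \<Rightarrow> bool" where
  "chain_ring _ \<longleftrightarrow> (0::'r) \<noteq> 1 \<and>
     (\<forall>I J :: 'r set. r_ideal I \<and> r_ideal J \<longrightarrow> I \<subseteq> J \<or> J \<subseteq> I)"

definition max_ideal :: "'r::comm_ring_1 set" where
  "max_ideal = (THE M. maximal_r_ideal M)"

section \<open>Polynomials modulo the maximal ideal, i.e. the ring (R/m)[x]\<close>

definition cong_m :: "'r::comm_ring_1 poly \<Rightarrow> 'r poly \<Rightarrow> bool" where
  "cong_m f g \<longleftrightarrow> (\<forall>i. coeff f i - coeff g i \<in> max_ideal)"

definition unit_mod_m :: "'r::comm_ring_1 poly \<Rightarrow> bool" where
  "unit_mod_m f \<longleftrightarrow> (\<exists>g. cong_m (f * g) 1)"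

definition irred_mod_m :: "'r::comm_ring_1 poly \<Rightarrow> bool" where
  "irred_mod_m h \<longleftrightarrow> \<not> cong_m h 0 \<and> \<not> unit_mod_m h \<and>
     (\<forall>f g. cong_m h (f * g) \<longrightarrow> unit_mod_m f \<or> unit_mod_m g)"

section \<open>S = R[x]/(h), elements represented by their reduced representatives (degree < deg h)\<close>

definition S_set :: "'r::comm_ring_1 poly \<Rightarrow> 'r poly set" where
  "S_set h = {p. degree p < degree h}"

definition is_R_basis :: "'r::comm_ring_1 poly \<Rightarrow> (nat \<Rightarrow> 'r poly) \<Rightarrow> bool" where
  "is_R_basis h \<alpha> \<longleftrightarrow> (\<forall>k<degree h. \<alpha> k \<in> S_set h) \<and>
     (\<forall>p\<in>S_set h. \<exists>!c. (\<forall>k\<ge>degree h. c k = 0) \<and>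
                      p = (\<Sum>k<degree h. smult (c k) (\<alpha> k)))"

definition coords :: "'r::comm_ring_1 poly \<Rightarrow> (nat \<Rightarrow> 'r poly) \<Rightarrow> 'r poly \<Rightarrow> nat \<Rightarrow> 'r" where
  "coords h \<alpha> p = (SOME c. (\<forall>k\<ge>degree h. c k = 0) \<and>
                      p = (\<Sum>k<degree h. smult (c k) (\<alpha> k)))"

section \<open>Matrices over R (as functions, with explicit dimensions) and Smith normal form\<close>

definition inv_mat :: "nat \<Rightarrow> (nat \<Rightarrow> nat \<Rightarrow> 'r::comm_ring_1) \<Rightarrow> bool" where
  "inv_mat n A \<longleftrightarrow> (\<exists>B. \<forall>i<n. \<forall>j<n.
      (\<Sum>k<n. A i k * B k j) = (if i = j then 1 else 0) \<and>
      (\<Sum>k<n. B i k * A k j) = (if i = j then 1 else 0))"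

definition is_snf :: "nat \<Rightarrow> nat \<Rightarrow> (nat \<Rightarrow> nat \<Rightarrow> 'r::comm_ring_1) \<Rightarrow> (nat \<Rightarrow> nat \<Rightarrow> 'r) \<Rightarrow> bool" where
  "is_snf a b C D \<longleftrightarrow>
     (\<exists>P Q. inv_mat a P \<and> inv_mat b Q \<and>
        (\<forall>i<a. \<forall>j<b. D i j = (\<Sum>u<a. \<Sum>v<b. P i u * C u v * Q v j))) \<and>
     (\<forall>i<a. \<forall>j<b. i \<noteq> j \<longrightarrow> D i j = 0) \<and>
     (\<forall>i. Suc i < min a b \<longrightarrow> D i i dvd D (Suc i) (Suc i))"

definition snf_rank :: "nat \<Rightarrow> nat \<Rightarrow> (nat \<Rightarrow> nat \<Rightarrow> 'r::comm_ring_1) \<Rightarrow> nat" where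
  "snf_rank a b C = (SOME r. \<exists>D. is_snf a b C D \<and> r = card {i. i < min a b \<and> D i i \<noteq> 0})"

definition rk :: "'r::comm_ring_1 poly \<Rightarrow> (nat \<Rightarrow> 'r poly) \<Rightarrow> nat \<Rightarrow> (nat \<Rightarrow> 'r poly) \<Rightarrow> nat" where
  "rk h \<alpha> s u = snf_rank (degree h) s (\<lambda>i j. coords h \<alpha> (u j) i)"

definition Sn :: "'r::comm_ring_1 poly \<Rightarrow> nat \<Rightarrow> (nat \<Rightarrow> 'r poly) set" where
  "Sn h n = {c. (\<forall>j<n. c j \<in> S_set h) \<and> (\<forall>j\<ge>n. c j = 0)}"

definition offs :: "nat list \<Rightarrow> nat \<Rightarrow> nat" where
  "offs ns i = sum_list (take i ns)"

definition wt_SR :: "'r::comm_ring_1 poly \<Rightarrow> (nat \<Rightarrow> 'r poly) \<Rightarrow> nat list \<Rightarrow> (nat \<Rightarrow> 'r poly) \<Rightarrow> nat" where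
  "wt_SR h \<alpha> ns c = (\<Sum>i<length ns. rk h \<alpha> (ns ! i) (\<lambda>j. c (offs ns i + j)))"

definition d_SR :: "'r::comm_ring_1 poly \<Rightarrow> (nat \<Rightarrow> 'r poly) \<Rightarrow> nat list \<Rightarrow> (nat \<Rightarrow> 'r poly) set \<Rightarrow> nat" where
  "d_SR h \<alpha> ns C = Min {wt_SR h \<alpha> ns (\<lambda>j. c j - d j) | c d. c \<in> C \<and> d \<in> C \<and> c \<noteq> d}"

definition is_MSRD :: "'r::comm_ring_1 poly \<Rightarrow> (nat \<Rightarrow> 'r poly) \<Rightarrow> nat list \<Rightarrow> (nat \<Rightarrow> 'r poly) set \<Rightarrow> bool" where
  "is_MSRD h \<alpha> ns C \<longleftrightarrow> (\<exists>k::nat. k > 0 \<and> log (card (S_set h)) (card C) = real k \<and>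
      d_SR h \<alpha> ns C = sum_list ns - k + 1)"

definition d_H :: "nat \<Rightarrow> (nat \<Rightarrow> 'a::zero) set \<Rightarrow> nat" where
  "d_H n D = Min {card {j. j < n \<and> c j \<noteq> d j} | c d. c \<in> D \<and> d \<in> D \<and> c \<noteq> d}"

definition is_MDS :: "'r::comm_ring_1 poly \<Rightarrow> nat \<Rightarrow> (nat \<Rightarrow> 'r poly) set \<Rightarrow> bool" where
  "is_MDS h n D \<longleftrightarrow> real (d_H n D) = real n - log (card (S_set h)) (card D) + 1"

definition block_diag :: "nat list \<Rightarrow> (nat \<Rightarrow> nat \<Rightarrow> nat \<Rightarrow> 'r::comm_ring_1) \<Rightarrow> nat \<Rightarrow> nat \<Rightarrow> 'r" where
  "block_diag ns As t j = (\<Sum>i<length ns.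
      if offs ns i \<le> t \<and> t < offs ns i + ns ! i \<and> offs ns i \<le> j \<and> j < offs ns i + ns ! i
      then As i (t - offs ns i) (j - offs ns i) else 0)"

definition vec_mat :: "nat \<Rightarrow> (nat \<Rightarrow> 'r::comm_ring_1 poly) \<Rightarrow> (nat \<Rightarrow> nat \<Rightarrow> 'r) \<Rightarrow> nat \<Rightarrow> 'r poly" where
  "vec_mat n c M = (\<lambda>j. if j < n then (\<Sum>t<n. smult (M t j) (c t)) else 0)"

end

theory Submission
  imports Defs "Jordan_Normal_Form.Determinant"
begin

(* Over a chain ring every matrix has a Smith normal form.  Hence its rank is invariant under
   invertible column operations, is at most the number of its nonzero columns (reduce modulo
   the non-units), and equals that number after a suitable invertible column operation.
   Applied blockwise to the coordinate matrices of c in S^n, this makes wt_SR(c) the least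
   Hamming weight of c Diag(A_1, ..., A_l) over invertible blocks A_i, so d_SR(C) is the least
   minimum Hamming distance of the codes C Diag(A_1, ..., A_l).  Each of these codes has |S|^k
   words, so by the Singleton bound its distance is at most n - k + 1; thus d_SR(C) = n - k + 1
   exactly when all of them are MDS. *)

section \<open>Matrices as functions\<close>

text \<open>As in \<^const>\<open>inv_mat\<close> and \<^const>\<open>is_snf\<close>, a matrix is a function \<open>nat \<Rightarrow> nat \<Rightarrow> 'r\<close>
  whose dimensions are passed separately; only the entries inside them are meaningful, so
  matrices are compared with \<open>fmat_eq a b\<close>.\<close>

definition fmat_mult :: "nat \<Rightarrow> (nat \<Rightarrow> nat \<Rightarrow> 'r::comm_ring_1) \<Rightarrow> (nat \<Rightarrow> nat \<Rightarrow> 'r) \<Rightarrow> nat \<Rightarrow> nat \<Rightarrow> 'r"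
  where "fmat_mult n A B i j = (\<Sum>k<n. A i k * B k j)"

definition fmat_one :: "nat \<Rightarrow> nat \<Rightarrow> 'r::comm_ring_1"
  where "fmat_one i j = (if i = j then 1 else 0)"

definition fmat_eq :: "nat \<Rightarrow> nat \<Rightarrow> (nat \<Rightarrow> nat \<Rightarrow> 'r) \<Rightarrow> (nat \<Rightarrow> nat \<Rightarrow> 'r) \<Rightarrow> bool"
  where "fmat_eq a b A B \<longleftrightarrow> (\<forall>i<a. \<forall>j<b. A i j = B i j)"

lemma fmat_eq_refl [simp]: "fmat_eq a b A A"
  by (simp add: fmat_eq_def)

lemma fmat_eq_sym: "fmat_eq a b A B \<Longrightarrow> fmat_eq a b B A"
  by (simp add: fmat_eq_def)

lemma fmat_eq_trans [trans]: "fmat_eq a b A B \<Longrightarrow> fmat_eq a b B C \<Longrightarrow> fmat_eq a b A C"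
  by (simp add: fmat_eq_def)

lemma fmat_eq_eq_trans [trans]: "fmat_eq a b A B \<Longrightarrow> B = C \<Longrightarrow> fmat_eq a b A C"
  by simp

lemma eq_fmat_eq_trans [trans]: "A = B \<Longrightarrow> fmat_eq a b B C \<Longrightarrow> fmat_eq a b A C"
  by simp

lemma fmat_mult_assoc: "fmat_mult n (fmat_mult m A B) C = fmat_mult m A (fmat_mult n B C)"
proof (intro ext)
  fix i j
  have "fmat_mult n (fmat_mult m A B) C i j = (\<Sum>k<n. \<Sum>l<m. A i l * B l k * C k j)"
    by (simp add: fmat_mult_def sum_distrib_right)
  also have "\<dots> = (\<Sum>l<m. \<Sum>k<n. A i l * B l k * C k j)"
    by (rule sum.swap)
  also have "\<dots> = fmat_mult m A (fmat_mult n B C) i j"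
    by (simp add: fmat_mult_def sum_distrib_left mult.assoc)
  finally show "fmat_mult n (fmat_mult m A B) C i j = fmat_mult m A (fmat_mult n B C) i j" .
qed

lemma fmat_eq_mult:
  "fmat_eq a n A A' \<Longrightarrow> fmat_eq n b B B' \<Longrightarrow> fmat_eq a b (fmat_mult n A B) (fmat_mult n A' B')"
  unfolding fmat_eq_def fmat_mult_def by (auto intro!: sum.cong)

lemma sum_lessThan_delta_left:
  fixes n :: nat
  shows "(\<Sum>k<n. (if i = k then 1 else 0) * f k) = (if i < n then f i else (0::'a::comm_ring_1))"
  by (induct n) (auto simp: less_Suc_eq)

lemma sum_lessThan_delta_right:
  fixes n :: nat
  shows "(\<Sum>k<n. f k * (if k = j then 1 else 0)) = (if j < n then f j else (0::'a::comm_ring_1))"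
  by (induct n) (auto simp: less_Suc_eq)

lemma fmat_mult_one_left: "fmat_eq n b (fmat_mult n fmat_one B) B"
  unfolding fmat_eq_def fmat_mult_def fmat_one_def by (simp add: sum_lessThan_delta_left)

lemma fmat_mult_one_right: "fmat_eq a n (fmat_mult n A fmat_one) A"
  unfolding fmat_eq_def fmat_mult_def fmat_one_def by (simp add: sum_lessThan_delta_right)

lemma inv_mat_iff_fmat:
  "inv_mat n A \<longleftrightarrow> (\<exists>B. fmat_eq n n (fmat_mult n A B) fmat_one \<and> fmat_eq n n (fmat_mult n B A) fmat_one)"
  unfolding inv_mat_def fmat_eq_def fmat_mult_def fmat_one_def by blast

lemma inv_mat_fmat_one: "inv_mat n fmat_one"
  unfolding inv_mat_iff_fmat using fmat_mult_one_left by blast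

lemma inv_mat_fmat_mult:
  assumes "inv_mat n A" "inv_mat n B"
  shows "inv_mat n (fmat_mult n A B)"
proof -
  obtain A' where A': "fmat_eq n n (fmat_mult n A A') fmat_one" "fmat_eq n n (fmat_mult n A' A) fmat_one"
    using assms(1) inv_mat_iff_fmat by blast
  obtain B' where B': "fmat_eq n n (fmat_mult n B B') fmat_one" "fmat_eq n n (fmat_mult n B' B) fmat_one"
    using assms(2) inv_mat_iff_fmat by blast
  have "fmat_mult n (fmat_mult n A B) (fmat_mult n B' A') =
      fmat_mult n A (fmat_mult n (fmat_mult n B B') A')"
    by (simp add: fmat_mult_assoc)
  also have "fmat_eq n n \<dots> (fmat_mult n A (fmat_mult n fmat_one A'))"
    by (intro fmat_eq_mult B' fmat_eq_refl)
  also have "fmat_eq n n \<dots> (fmat_mult n A A')"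
    by (intro fmat_eq_mult fmat_mult_one_left fmat_eq_refl)
  also have "fmat_eq n n \<dots> fmat_one"
    by (rule A')
  finally have right: "fmat_eq n n (fmat_mult n (fmat_mult n A B) (fmat_mult n B' A')) fmat_one" .
  have "fmat_mult n (fmat_mult n B' A') (fmat_mult n A B) =
      fmat_mult n B' (fmat_mult n (fmat_mult n A' A) B)"
    by (simp add: fmat_mult_assoc)
  also have "fmat_eq n n \<dots> (fmat_mult n B' (fmat_mult n fmat_one B))"
    by (intro fmat_eq_mult A' fmat_eq_refl)
  also have "fmat_eq n n \<dots> (fmat_mult n B' B)"
    by (intro fmat_eq_mult fmat_mult_one_left fmat_eq_refl)
  also have "fmat_eq n n \<dots> fmat_one"
    by (rule B')
  finally have left: "fmat_eq n n (fmat_mult n (fmat_mult n B' A') (fmat_mult n A B)) fmat_one" .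
  show ?thesis
    using left right inv_mat_iff_fmat by blast
qed

lemma fmat_eq_cancel_left:
  assumes "fmat_eq a b D (fmat_mult a P M)" "fmat_eq a a (fmat_mult a P' P) fmat_one"
  shows "fmat_eq a b (fmat_mult a P' D) M"
proof -
  have "fmat_eq a b (fmat_mult a P' D) (fmat_mult a P' (fmat_mult a P M))"
    by (intro fmat_eq_mult assms(1) fmat_eq_refl)
  also have "\<dots> = fmat_mult a (fmat_mult a P' P) M"
    by (simp add: fmat_mult_assoc)
  also have "fmat_eq a b \<dots> (fmat_mult a fmat_one M)"
    by (intro fmat_eq_mult assms(2) fmat_eq_refl)
  also have "fmat_eq a b \<dots> M"
    by (rule fmat_mult_one_left)
  finally show ?thesis .
qed

lemma fmat_eq_cancel_right:
  assumes "fmat_eq a b D (fmat_mult b M Q)" "fmat_eq b b (fmat_mult b Q Q') fmat_one"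
  shows "fmat_eq a b (fmat_mult b D Q') M"
proof -
  have "fmat_eq a b (fmat_mult b D Q') (fmat_mult b (fmat_mult b M Q) Q')"
    by (intro fmat_eq_mult assms(1) fmat_eq_refl)
  also have "\<dots> = fmat_mult b M (fmat_mult b Q Q')"
    by (simp add: fmat_mult_assoc)
  also have "fmat_eq a b \<dots> (fmat_mult b M fmat_one)"
    by (intro fmat_eq_mult assms(2) fmat_eq_refl)
  also have "fmat_eq a b \<dots> M"
    by (rule fmat_mult_one_right)
  finally show ?thesis .
qed

definition fmat_equiv :: "nat \<Rightarrow> nat \<Rightarrow> (nat \<Rightarrow> nat \<Rightarrow> 'r::comm_ring_1) \<Rightarrow> (nat \<Rightarrow> nat \<Rightarrow> 'r) \<Rightarrow> bool"
  where "fmat_equiv a b C D \<longleftrightarrow>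
    (\<exists>P Q. inv_mat a P \<and> inv_mat b Q \<and> fmat_eq a b D (fmat_mult b (fmat_mult a P C) Q))"

lemma sum_sum_eq_fmat_mult:
  "(\<Sum>u<a. \<Sum>v<b. P i u * C u v * Q v j) = fmat_mult b (fmat_mult a P C) Q i j"
  unfolding fmat_mult_def sum_distrib_right by (rule sum.swap)

lemma is_snf_iff_fmat_equiv:
  "is_snf a b C D \<longleftrightarrow> fmat_equiv a b C D \<and> (\<forall>i<a. \<forall>j<b. i \<noteq> j \<longrightarrow> D i j = 0) \<and>
     (\<forall>i. Suc i < min a b \<longrightarrow> D i i dvd D (Suc i) (Suc i))"
  unfolding is_snf_def fmat_equiv_def fmat_eq_def sum_sum_eq_fmat_mult by simp

lemma fmat_equiv_mult_left:
  assumes "inv_mat a P" shows "fmat_equiv a b C (fmat_mult a P C)"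
proof -
  have "fmat_eq a b (fmat_mult a P C) (fmat_mult b (fmat_mult a P C) fmat_one)"
    by (rule fmat_eq_sym[OF fmat_mult_one_right])
  then show ?thesis
    unfolding fmat_equiv_def using assms inv_mat_fmat_one by blast
qed

lemma fmat_equiv_mult_right:
  assumes "inv_mat b Q" shows "fmat_equiv a b C (fmat_mult b C Q)"
proof -
  have "fmat_eq a b (fmat_mult b C Q) (fmat_mult b (fmat_mult a fmat_one C) Q)"
    by (intro fmat_eq_mult fmat_eq_sym[OF fmat_mult_one_left] fmat_eq_refl)
  then show ?thesis
    unfolding fmat_equiv_def using assms inv_mat_fmat_one by blast
qed

lemma fmat_eq_one_mult_one: "fmat_eq a b C (fmat_mult b (fmat_mult a fmat_one C) fmat_one)"
proof -
  have "fmat_eq a b C (fmat_mult a fmat_one C)"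
    by (rule fmat_eq_sym[OF fmat_mult_one_left])
  also have "fmat_eq a b \<dots> (fmat_mult b (fmat_mult a fmat_one C) fmat_one)"
    by (rule fmat_eq_sym[OF fmat_mult_one_right])
  finally show ?thesis .
qed

lemma fmat_eq_imp_fmat_equiv:
  assumes "fmat_eq a b C D" shows "fmat_equiv a b C D"
proof -
  have "fmat_eq a b D (fmat_mult b (fmat_mult a fmat_one C) fmat_one)"
    using fmat_eq_sym[OF assms] fmat_eq_one_mult_one by (rule fmat_eq_trans)
  then show ?thesis
    unfolding fmat_equiv_def using inv_mat_fmat_one by blast
qed

lemma fmat_equiv_refl: "fmat_equiv a b C C"
  by (rule fmat_eq_imp_fmat_equiv[OF fmat_eq_refl])

lemma fmat_equiv_trans [trans]:
  assumes "fmat_equiv a b C D" "fmat_equiv a b D E"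
  shows "fmat_equiv a b C E"
proof -
  obtain P Q where PQ: "inv_mat a P" "inv_mat b Q" "fmat_eq a b D (fmat_mult b (fmat_mult a P C) Q)"
    using assms(1) fmat_equiv_def by blast
  obtain P' Q' where PQ': "inv_mat a P'" "inv_mat b Q'" "fmat_eq a b E (fmat_mult b (fmat_mult a P' D) Q')"
    using assms(2) fmat_equiv_def by blast
  have "fmat_eq a b E (fmat_mult b (fmat_mult a P' (fmat_mult b (fmat_mult a P C) Q)) Q')"
    using PQ'(3) by (rule fmat_eq_trans) (intro fmat_eq_mult PQ(3) fmat_eq_refl)
  also have "\<dots> = fmat_mult b (fmat_mult a (fmat_mult a P' P) C) (fmat_mult b Q Q')"
    by (simp add: fmat_mult_assoc)
  finally show ?thesis
    unfolding fmat_equiv_def using PQ PQ' inv_mat_fmat_mult by blast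
qed

lemma fmat_equiv_sym:
  assumes "fmat_equiv a b C D" shows "fmat_equiv a b D C"
proof -
  obtain P Q where PQ: "inv_mat a P" "inv_mat b Q" "fmat_eq a b D (fmat_mult b (fmat_mult a P C) Q)"
    using assms fmat_equiv_def by blast
  obtain P' where P': "fmat_eq a a (fmat_mult a P' P) fmat_one" "inv_mat a P'"
    using PQ(1) unfolding inv_mat_iff_fmat by blast
  obtain Q' where Q': "fmat_eq b b (fmat_mult b Q Q') fmat_one" "inv_mat b Q'"
    using PQ(2) unfolding inv_mat_iff_fmat by blast
  have "fmat_eq a b C (fmat_mult b (fmat_mult a fmat_one C) fmat_one)"
    by (rule fmat_eq_one_mult_one)
  also have "fmat_eq a b \<dots> (fmat_mult b (fmat_mult a (fmat_mult a P' P) C) (fmat_mult b Q Q'))"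
    by (intro fmat_eq_mult fmat_eq_sym[OF P'(1)] fmat_eq_sym[OF Q'(1)] fmat_eq_refl)
  also have "\<dots> = fmat_mult b (fmat_mult a P' (fmat_mult b (fmat_mult a P C) Q)) Q'"
    by (simp add: fmat_mult_assoc)
  also have "fmat_eq a b \<dots> (fmat_mult b (fmat_mult a P' D) Q')"
    by (intro fmat_eq_mult fmat_eq_sym[OF PQ(3)] fmat_eq_refl)
  finally show ?thesis
    unfolding fmat_equiv_def using P'(2) Q'(2) by blast
qed

definition perm_fmat :: "(nat \<Rightarrow> nat) \<Rightarrow> nat \<Rightarrow> nat \<Rightarrow> 'r::comm_ring_1"
  where "perm_fmat \<sigma> i j = (if \<sigma> i = j then 1 else 0)"

lemma transpose_less:
  "k < a \<Longrightarrow> p < a \<Longrightarrow> x < a \<Longrightarrow> Transposition.transpose k p x < a"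
  by (simp add: Transposition.transpose_def)

lemma fmat_mult_transpose_left:
  assumes "k < a" "p < a" "i < a"
  shows "fmat_mult a (perm_fmat (Transposition.transpose k p)) B i j = B (Transposition.transpose k p i) j"
  unfolding fmat_mult_def perm_fmat_def using assms
  by (simp add: sum_lessThan_delta_left transpose_less)

lemma transpose_eq_iff_eq_transpose:
  "Transposition.transpose k q t = j \<longleftrightarrow> t = Transposition.transpose k q j"
  by (auto simp: Transposition.transpose_def)

lemma fmat_mult_transpose_right:
  assumes "k < b" "q < b" "j < b"
  shows "fmat_mult b B (perm_fmat (Transposition.transpose k q)) i j = B i (Transposition.transpose k q j)"
  unfolding fmat_mult_def perm_fmat_def transpose_eq_iff_eq_transpose using assms
  by (simp add: sum_lessThan_delta_right transpose_less)

lemma inv_mat_perm_fmat_transpose: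
  assumes "k < a" "p < a"
  shows "inv_mat a (perm_fmat (Transposition.transpose k p))"
proof -
  let ?P = "perm_fmat (Transposition.transpose k p)"
  have "fmat_eq a a (fmat_mult a ?P ?P) fmat_one"
    unfolding fmat_eq_def using assms
    by (simp add: fmat_mult_transpose_left transpose_less) (simp add: perm_fmat_def fmat_one_def)
  then show ?thesis
    unfolding inv_mat_iff_fmat by blast
qed

lemma fmat_equiv_swap_rows:
  assumes "k < a" "p < a"
  shows "fmat_equiv a b D (\<lambda>i j. D (Transposition.transpose k p i) j)"
proof -
  have "fmat_equiv a b D (fmat_mult a (perm_fmat (Transposition.transpose k p)) D)"
    by (rule fmat_equiv_mult_left[OF inv_mat_perm_fmat_transpose[OF assms]])
  also have "fmat_equiv a b \<dots> (\<lambda>i j. D (Transposition.transpose k p i) j)"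
    by (rule fmat_eq_imp_fmat_equiv) (simp add: fmat_eq_def fmat_mult_transpose_left assms)
  finally show ?thesis .
qed

lemma fmat_equiv_swap_cols:
  assumes "k < b" "q < b"
  shows "fmat_equiv a b D (\<lambda>i j. D i (Transposition.transpose k q j))"
proof -
  have "fmat_equiv a b D (fmat_mult b D (perm_fmat (Transposition.transpose k q)))"
    by (rule fmat_equiv_mult_right[OF inv_mat_perm_fmat_transpose[OF assms]])
  also have "fmat_equiv a b \<dots> (\<lambda>i j. D i (Transposition.transpose k q j))"
    by (rule fmat_eq_imp_fmat_equiv) (simp add: fmat_eq_def fmat_mult_transpose_right assms)
  finally show ?thesis .
qed

definition add_row_fmat :: "(nat \<Rightarrow> 'r) \<Rightarrow> nat \<Rightarrow> nat \<Rightarrow> nat \<Rightarrow> 'r::comm_ring_1"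
  where "add_row_fmat x k i j = fmat_one i j + (if j = k \<and> i \<noteq> k then x i else 0)"

definition add_col_fmat :: "(nat \<Rightarrow> 'r) \<Rightarrow> nat \<Rightarrow> nat \<Rightarrow> nat \<Rightarrow> 'r::comm_ring_1"
  where "add_col_fmat x k i j = fmat_one i j + (if i = k \<and> j \<noteq> k then x j else 0)"

lemma sum_lessThan_single:
  fixes n :: nat
  shows "(\<Sum>t<n. if t = k \<and> c then g t else 0) = (if k < n \<and> c then g k else (0::'a::comm_ring_1))"
  by (induct n) (auto simp: less_Suc_eq)

lemma fmat_mult_add_row:
  assumes "k < a" "i < a"
  shows "fmat_mult a (add_row_fmat x k) B i j = B i j + (if i \<noteq> k then x i * B k j else 0)"
proof -
  have "fmat_mult a (add_row_fmat x k) B i j =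
      (\<Sum>t<a. fmat_one i t * B t j) + (\<Sum>t<a. if t = k \<and> i \<noteq> k then x i * B t j else 0)"
    unfolding fmat_mult_def add_row_fmat_def
    by (simp add: distrib_right sum.distrib if_distrib[of "\<lambda>z. z * _"] cong: if_cong)
  then show ?thesis
    using assms by (simp add: sum_lessThan_single fmat_one_def sum_lessThan_delta_left)
qed

lemma fmat_mult_add_col:
  assumes "k < b" "j < b"
  shows "fmat_mult b B (add_col_fmat x k) i j = B i j + (if j \<noteq> k then B i k * x j else 0)"
proof -
  have "fmat_mult b B (add_col_fmat x k) i j =
      (\<Sum>t<b. B i t * fmat_one t j) + (\<Sum>t<b. if t = k \<and> j \<noteq> k then B i t * x j else 0)"
    unfolding fmat_mult_def add_col_fmat_def
    by (simp add: distrib_left sum.distrib if_distrib[of "\<lambda>z. _ * z"] cong: if_cong)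
  then show ?thesis
    using assms by (simp add: sum_lessThan_single fmat_one_def sum_lessThan_delta_right)
qed

lemma inv_mat_add_row_fmat:
  fixes x :: "nat \<Rightarrow> 'r::comm_ring_1"
  assumes "k < a" shows "inv_mat a (add_row_fmat x k)"
proof -
  have inverse: "fmat_eq a a (fmat_mult a (add_row_fmat y k) (add_row_fmat (\<lambda>i. - y i) k)) fmat_one"
    for y :: "nat \<Rightarrow> 'r"
    unfolding fmat_eq_def using assms
    by (simp add: fmat_mult_add_row) (simp add: add_row_fmat_def fmat_one_def)
  show ?thesis
    unfolding inv_mat_iff_fmat using inverse[of x] inverse[of "\<lambda>i. - x i"] by auto
qed

lemma inv_mat_add_col_fmat:
  fixes x :: "nat \<Rightarrow> 'r::comm_ring_1"
  assumes "k < b" shows "inv_mat b (add_col_fmat x k)"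
proof -
  have inverse: "fmat_eq b b (fmat_mult b (add_col_fmat y k) (add_col_fmat (\<lambda>i. - y i) k)) fmat_one"
    for y :: "nat \<Rightarrow> 'r"
    unfolding fmat_eq_def using assms
    by (simp add: fmat_mult_add_col) (simp add: add_col_fmat_def fmat_one_def)
  show ?thesis
    unfolding inv_mat_iff_fmat using inverse[of x] inverse[of "\<lambda>i. - x i"] by auto
qed

lemma fmat_equiv_add_rows:
  assumes "k < a"
  shows "fmat_equiv a b D (\<lambda>i j. D i j + (if i \<noteq> k then x i * D k j else 0))"
proof -
  have "fmat_equiv a b D (fmat_mult a (add_row_fmat x k) D)"
    by (rule fmat_equiv_mult_left[OF inv_mat_add_row_fmat[OF assms]])
  also have "fmat_equiv a b \<dots> (\<lambda>i j. D i j + (if i \<noteq> k then x i * D k j else 0))"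
    by (rule fmat_eq_imp_fmat_equiv) (simp add: fmat_eq_def fmat_mult_add_row assms)
  finally show ?thesis .
qed

lemma fmat_equiv_add_cols:
  assumes "k < b"
  shows "fmat_equiv a b D (\<lambda>i j. D i j + (if j \<noteq> k then D i k * x j else 0))"
proof -
  have "fmat_equiv a b D (fmat_mult b D (add_col_fmat x k))"
    by (rule fmat_equiv_mult_right[OF inv_mat_add_col_fmat[OF assms]])
  also have "fmat_equiv a b \<dots> (\<lambda>i j. D i j + (if j \<noteq> k then D i k * x j else 0))"
    by (rule fmat_eq_imp_fmat_equiv) (simp add: fmat_eq_def fmat_mult_add_col assms)
  finally show ?thesis .
qed

section \<open>Smith normal forms over rings with totally ordered divisibility\<close>

definition snf_prefix :: "nat \<Rightarrow> nat \<Rightarrow> nat \<Rightarrow> (nat \<Rightarrow> nat \<Rightarrow> 'r::comm_ring_1) \<Rightarrow> bool"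
  where "snf_prefix a b k D \<longleftrightarrow>
    (\<forall>i<a. \<forall>j<b. i \<noteq> j \<and> (i < k \<or> j < k) \<longrightarrow> D i j = 0) \<and>
    (\<forall>i<k. \<forall>u v. i \<le> u \<and> u < a \<and> i \<le> v \<and> v < b \<longrightarrow> D i i dvd D u v)"

lemma finite_ex_dvd_all:
  fixes f :: "'b \<Rightarrow> 'r::comm_ring_1"
  assumes tot: "\<forall>x y::'r. x dvd y \<or> y dvd x" and "finite T" "T \<noteq> {}"
  shows "\<exists>t\<in>T. \<forall>s\<in>T. f t dvd f s"
  using assms(2,3)
proof (induction T rule: finite_ne_induct)
  case (singleton x)
  then show ?case by simp
next
  case (insert x F)
  then obtain t where t: "t \<in> F" "\<forall>s\<in>F. f t dvd f s"
    by blast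
  show ?case
  proof (cases "f x dvd f t")
    case True
    then have "\<forall>s\<in>insert x F. f x dvd f s"
      using t(2) dvd_trans[OF True] dvd_refl by blast
    then show ?thesis by blast
  next
    case False
    then have "f t dvd f x"
      using tot by blast
    then show ?thesis
      using t by blast
  qed
qed

lemma transpose_below:
  fixes k p x :: nat
  assumes "k \<le> p"
  shows "x < k \<Longrightarrow> Transposition.transpose k p x = x"
    and "k \<le> x \<Longrightarrow> k \<le> Transposition.transpose k p x"
  using assms by (auto simp: Transposition.transpose_def)

lemma snf_prefix_transpose:
  assumes p: "k \<le> p" "p < a" and q: "k \<le> q" "q < b" and D: "snf_prefix a b k D"
  shows "snf_prefix a b k (\<lambda>i j. D (Transposition.transpose k p i) (Transposition.transpose k q j))"
  unfolding snf_prefix_def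
proof (intro conjI allI impI)
  let ?\<sigma> = "Transposition.transpose k p" and ?\<tau> = "Transposition.transpose k q"
  fix i j
  assume ij: "i < a" "j < b" "i \<noteq> j \<and> (i < k \<or> j < k)"
  then have "?\<sigma> i \<noteq> ?\<tau> j \<and> (?\<sigma> i < k \<or> ?\<tau> j < k)"
    using transpose_below[OF p(1), of i] transpose_below[OF q(1), of j]
    by (cases "i < k"; cases "j < k") auto
  moreover have "?\<sigma> i < a" "?\<tau> j < b"
    using ij p q by (simp_all add: transpose_less)
  ultimately show "D (?\<sigma> i) (?\<tau> j) = 0"
    using D unfolding snf_prefix_def by blast
next
  let ?\<sigma> = "Transposition.transpose k p" and ?\<tau> = "Transposition.transpose k q"
  fix i u v
  assume iuv: "i < k" "i \<le> u \<and> u < a \<and> i \<le> v \<and> v < b"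
  have "i \<le> ?\<sigma> u" "?\<sigma> u < a"
    using iuv p transpose_below[OF p(1), of u] by (cases "u < k"; simp add: transpose_less)+
  moreover have "i \<le> ?\<tau> v" "?\<tau> v < b"
    using iuv q transpose_below[OF q(1), of v] by (cases "v < k"; simp add: transpose_less)+
  ultimately show "D (?\<sigma> i) (?\<tau> i) dvd D (?\<sigma> u) (?\<tau> v)"
    using D iuv(1) transpose_below(1)[OF p(1)] transpose_below(1)[OF q(1)] unfolding snf_prefix_def by simp
qed

lemma snf_prefix_pivot:
  fixes D :: "nat \<Rightarrow> nat \<Rightarrow> 'r::comm_ring_1"
  assumes tot: "\<forall>x y::'r. x dvd y \<or> y dvd x"
    and k: "k < a" "k < b" and D: "snf_prefix a b k D"
  shows "\<exists>D'. fmat_equiv a b D D' \<and> snf_prefix a b k D' \<and>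
    (\<forall>u v. k \<le> u \<and> u < a \<and> k \<le> v \<and> v < b \<longrightarrow> D' k k dvd D' u v)"
proof -
  let ?T = "{k..<a} \<times> {k..<b}"
  have "finite ?T" "?T \<noteq> {}"
    using k by auto
  then obtain t where t: "t \<in> ?T" and least: "\<forall>s\<in>?T. D (fst t) (snd t) dvd D (fst s) (snd s)"
    using finite_ex_dvd_all[OF tot, of ?T "\<lambda>s. D (fst s) (snd s)"] by blast
  define p q where "p = fst t" and "q = snd t"
  have p: "k \<le> p" "p < a" and q: "k \<le> q" "q < b"
    using t by (auto simp: p_def q_def)
  let ?\<sigma> = "Transposition.transpose k p" and ?\<tau> = "Transposition.transpose k q"
  define D' where "D' = (\<lambda>i j. D (?\<sigma> i) (?\<tau> j))"
  have "fmat_equiv a b D (\<lambda>i j. D (?\<sigma> i) j)"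
    by (rule fmat_equiv_swap_rows[OF k(1) p(2)])
  also have "fmat_equiv a b \<dots> D'"
    unfolding D'_def by (rule fmat_equiv_swap_cols[OF k(2) q(2)])
  finally have "fmat_equiv a b D D'" .
  moreover have "snf_prefix a b k D'"
    unfolding D'_def by (rule snf_prefix_transpose[OF p q D])
  moreover have "D' k k dvd D' u v" if "k \<le> u" "u < a" "k \<le> v" "v < b" for u v
  proof -
    have "(?\<sigma> u, ?\<tau> v) \<in> ?T"
      using that p q transpose_below(2)[OF p(1)] transpose_below(2)[OF q(1)] by (simp add: transpose_less)
    then show ?thesis
      using least unfolding D'_def p_def q_def by auto
  qed
  ultimately show ?thesis
    by blast
qed

text \<open>Clearing row and column \<open>k\<close> with multipliers \<open>y\<close> and \<open>z\<close> such that
  \<open>D i k = D k k * y i\<close> and \<open>D k j = D k k * z j\<close>.\<close>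

definition clear_pivot :: "nat \<Rightarrow> (nat \<Rightarrow> 'r) \<Rightarrow> (nat \<Rightarrow> 'r) \<Rightarrow> (nat \<Rightarrow> nat \<Rightarrow> 'r::comm_ring_1) \<Rightarrow> nat \<Rightarrow> nat \<Rightarrow> 'r"
  where "clear_pivot k y z D u v = (D u v - (if k < u then y u * D k v else 0)) -
    (if k < v then (D u k - (if k < u then y u * D k k else 0)) * z v else 0)"

lemma fmat_equiv_clear_pivot:
  assumes "k < a" "k < b"
  shows "fmat_equiv a b D (clear_pivot k y z D)"
proof -
  let ?D2 = "\<lambda>i j. D i j + (if i \<noteq> k then (if k < i then - y i else 0) * D k j else 0)"
  let ?D3 = "\<lambda>i j. ?D2 i j + (if j \<noteq> k then ?D2 i k * (if k < j then - z j else 0) else 0)"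
  have "fmat_equiv a b D ?D2"
    by (rule fmat_equiv_add_rows[OF assms(1)])
  also have "fmat_equiv a b ?D2 ?D3"
    by (rule fmat_equiv_add_cols[OF assms(2)])
  also have "?D3 = clear_pivot k y z D"
    by (auto simp: clear_pivot_def fun_eq_iff)
  finally show ?thesis .
qed

lemma dvd_clear_pivot:
  assumes "\<And>u v. i \<le> u \<Longrightarrow> u < a \<Longrightarrow> i \<le> v \<Longrightarrow> v < b \<Longrightarrow> d dvd D u v"
    and "k < a" "k < b" "i \<le> k" "i \<le> u" "u < a" "i \<le> v" "v < b"
  shows "d dvd clear_pivot k y z D u v"
proof -
  have "d dvd D u v" "d dvd D k v" "d dvd D u k" "d dvd D k k"
    using assms by auto
  then show ?thesis
    unfolding clear_pivot_def by (simp add: dvd_diff dvd_mult dvd_mult2)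
qed

lemma snf_prefix_clear_pivot:
  fixes D :: "nat \<Rightarrow> nat \<Rightarrow> 'r::comm_ring_1"
  assumes k: "k < a" "k < b" and D: "snf_prefix a b k D"
    and pivot: "\<And>u v. k \<le> u \<Longrightarrow> u < a \<Longrightarrow> k \<le> v \<Longrightarrow> v < b \<Longrightarrow> D k k dvd D u v"
    and y: "\<And>i. k < i \<Longrightarrow> i < a \<Longrightarrow> D i k = D k k * y i"
    and z: "\<And>j. k < j \<Longrightarrow> j < b \<Longrightarrow> D k j = D k k * z j"
  shows "snf_prefix a b (Suc k) (clear_pivot k y z D)"
  unfolding snf_prefix_def
proof (intro conjI allI impI)
  fix i j
  assume ij: "i < a" "j < b" "i \<noteq> j \<and> (i < Suc k \<or> j < Suc k)"
  have zero: "D i' j' = 0" if "i' < a" "j' < b" "i' \<noteq> j'" "i' < k \<or> j' < k" for i' j'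
    using D that unfolding snf_prefix_def by blast
  consider "i < k" | "i = k" "j < k" | "i = k" "k < j" | "k < i" "j < k" | "k < i" "j = k"
    using ij by linarith
  then show "clear_pivot k y z D i j = 0"
  proof cases
    case 3
    then show ?thesis
      unfolding clear_pivot_def using ij z[of j] by simp
  next
    case 5
    then show ?thesis
      unfolding clear_pivot_def using ij y[of i] by (simp add: mult.commute)
  qed (use ij k in \<open>simp_all add: clear_pivot_def zero\<close>)
next
  fix i u v
  assume iuv: "i < Suc k" "i \<le> u \<and> u < a \<and> i \<le> v \<and> v < b"
  have block: "D i i dvd D u' v'" if "i \<le> u'" "u' < a" "i \<le> v'" "v' < b" for u' v'
  proof (cases "i < k")
    case True
    then show ?thesis
      using D that unfolding snf_prefix_def by blast
  next
    case False
    then have "i = k"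
      using iuv(1) by simp
    then show ?thesis
      using pivot that by blast
  qed
  have "D i i dvd clear_pivot k y z D u v"
    by (rule dvd_clear_pivot[where i = i and a = a and b = b, OF block]) (use k iuv in auto)
  moreover have "clear_pivot k y z D i i = D i i"
    unfolding clear_pivot_def using iuv by simp
  ultimately show "clear_pivot k y z D i i dvd clear_pivot k y z D u v"
    by simp
qed

lemma snf_prefix_clear:
  fixes D :: "nat \<Rightarrow> nat \<Rightarrow> 'r::comm_ring_1"
  assumes k: "k < a" "k < b" and D: "snf_prefix a b k D"
    and pivot: "\<And>u v. k \<le> u \<Longrightarrow> u < a \<Longrightarrow> k \<le> v \<Longrightarrow> v < b \<Longrightarrow> D k k dvd D u v"
  shows "\<exists>D'. fmat_equiv a b D D' \<and> snf_prefix a b (Suc k) D'"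
proof -
  define y where "y i = (SOME t. D i k = D k k * t)" for i
  define z where "z j = (SOME t. D k j = D k k * t)" for j
  have "D i k = D k k * y i" if "k < i" "i < a" for i
    unfolding y_def by (rule someI_ex[of "\<lambda>t. D i k = D k k * t"])
      (use pivot[of i k] that k in \<open>simp add: dvd_def\<close>)
  moreover have "D k j = D k k * z j" if "k < j" "j < b" for j
    unfolding z_def by (rule someI_ex[of "\<lambda>t. D k j = D k k * t"])
      (use pivot[of k j] that k in \<open>simp add: dvd_def\<close>)
  ultimately have "snf_prefix a b (Suc k) (clear_pivot k y z D)"
    using snf_prefix_clear_pivot[OF k D pivot] by blast
  then show ?thesis
    using fmat_equiv_clear_pivot[OF k] by blast
qed

lemma snf_prefix_exists:
  fixes C :: "nat \<Rightarrow> nat \<Rightarrow> 'r::comm_ring_1"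
  assumes tot: "\<forall>x y::'r. x dvd y \<or> y dvd x"
  shows "k \<le> min a b \<Longrightarrow> \<exists>D. fmat_equiv a b C D \<and> snf_prefix a b k D"
proof (induction k)
  case 0
  have "snf_prefix a b 0 C"
    unfolding snf_prefix_def by simp
  then show ?case
    using fmat_equiv_refl by blast
next
  case (Suc k)
  then obtain D where D: "fmat_equiv a b C D" "snf_prefix a b k D"
    by auto
  have k: "k < a" "k < b"
    using Suc.prems by auto
  obtain D' where D': "fmat_equiv a b D D'" "snf_prefix a b k D'"
    and "\<forall>u v. k \<le> u \<and> u < a \<and> k \<le> v \<and> v < b \<longrightarrow> D' k k dvd D' u v"
    using snf_prefix_pivot[OF tot k D(2)] by blast
  then have pivot: "\<And>u v. k \<le> u \<Longrightarrow> u < a \<Longrightarrow> k \<le> v \<Longrightarrow> v < b \<Longrightarrow> D' k k dvd D' u v"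
    by blast
  obtain D'' where D'': "fmat_equiv a b D' D''" "snf_prefix a b (Suc k) D''"
    using snf_prefix_clear[OF k D'(2) pivot] by blast
  then show ?case
    using fmat_equiv_trans[OF fmat_equiv_trans[OF D(1) D'(1)] D''(1)] by blast
qed

theorem snf_exists:
  fixes C :: "nat \<Rightarrow> nat \<Rightarrow> 'r::comm_ring_1"
  assumes tot: "\<forall>x y::'r. x dvd y \<or> y dvd x"
  shows "\<exists>D. is_snf a b C D"
proof -
  obtain D where D: "fmat_equiv a b C D" "snf_prefix a b (min a b) D"
    using snf_prefix_exists[OF tot, of "min a b" a b C] by blast
  have "D i j = 0" if "i < a" "j < b" "i \<noteq> j" for i j
  proof -
    have "i < min a b \<or> j < min a b"
      using that by (auto simp: min_def)
    then show ?thesis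
      using D(2) that unfolding snf_prefix_def by blast
  qed
  moreover have "D i i dvd D (Suc i) (Suc i)" if "Suc i < min a b" for i
  proof -
    have "i < min a b" "i \<le> Suc i" "Suc i < a" "Suc i < b"
      using that by auto
    then show ?thesis
      using D(2) unfolding snf_prefix_def by blast
  qed
  ultimately show ?thesis
    unfolding is_snf_iff_fmat_equiv using D(1) by blast
qed

section \<open>The rank of a matrix over a chain ring\<close>

lemma snf_rank_fmat_equiv:
  assumes "fmat_equiv a b C C'"
  shows "snf_rank a b C = snf_rank a b C'"
proof -
  have "fmat_equiv a b C D \<longleftrightarrow> fmat_equiv a b C' D" for D
    using fmat_equiv_trans[OF assms] fmat_equiv_trans[OF fmat_equiv_sym[OF assms]] by blast
  then have "is_snf a b C D \<longleftrightarrow> is_snf a b C' D" for D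
    unfolding is_snf_iff_fmat_equiv by simp
  then show ?thesis
    unfolding snf_rank_def by simp
qed

lemma snf_rank_mult_right:
  assumes "inv_mat b Q"
  shows "snf_rank a b (fmat_mult b C Q) = snf_rank a b C"
  using snf_rank_fmat_equiv[OF fmat_equiv_mult_right[OF assms]] by simp

lemma snf_rankE:
  fixes C :: "nat \<Rightarrow> nat \<Rightarrow> 'r::comm_ring_1"
  assumes tot: "\<forall>x y::'r. x dvd y \<or> y dvd x"
  obtains D where "is_snf a b C D" "snf_rank a b C = card {i. i < min a b \<and> D i i \<noteq> 0}"
proof -
  obtain D where "is_snf a b C D"
    using snf_exists[OF tot] by blast
  then have "\<exists>r D. is_snf a b C D \<and> r = card {i. i < min a b \<and> D i i \<noteq> 0}"
    by blast
  then have "\<exists>D. is_snf a b C D \<and> snf_rank a b C = card {i. i < min a b \<and> D i i \<noteq> 0}"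
    unfolding snf_rank_def by (rule someI_ex)
  then show ?thesis
    using that by blast
qed

lemma fmat_mult_diag_right:
  assumes "\<forall>u<a. \<forall>v<b. u \<noteq> v \<longrightarrow> D u v = 0" "j < b"
  shows "fmat_mult a P D i j = (if j < a then P i j * D j j else 0)"
proof -
  have "fmat_mult a P D i j = (\<Sum>u<a. if u = j then P i u * D u j else 0)"
    unfolding fmat_mult_def using assms by (intro sum.cong) auto
  then show ?thesis by simp
qed

lemma fmat_mult_diag_left:
  assumes "\<forall>u<a. \<forall>v<b. u \<noteq> v \<longrightarrow> D u v = 0" "i < a"
  shows "fmat_mult b D Q i j = (if i < b then D i i * Q i j else 0)"
proof -
  have "fmat_mult b D Q i j = (\<Sum>v<b. if v = i then D i v * Q v j else 0)"
    unfolding fmat_mult_def using assms by (intro sum.cong) auto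
  then show ?thesis by simp
qed

definition nonzero_cols :: "nat \<Rightarrow> nat \<Rightarrow> (nat \<Rightarrow> nat \<Rightarrow> 'r::zero) \<Rightarrow> nat set"
  where "nonzero_cols a b C = {j. j < b \<and> (\<exists>i<a. C i j \<noteq> 0)}"

lemma nonzero_cols_cong: "fmat_eq a b C C' \<Longrightarrow> nonzero_cols a b C = nonzero_cols a b C'"
  unfolding nonzero_cols_def fmat_eq_def by auto

lemma ex_inv_mat_card_nonzero_cols_le_snf_rank:
  fixes C :: "nat \<Rightarrow> nat \<Rightarrow> 'r::comm_ring_1"
  assumes tot: "\<forall>x y::'r. x dvd y \<or> y dvd x"
  shows "\<exists>Q. inv_mat b Q \<and> card (nonzero_cols a b (fmat_mult b C Q)) \<le> snf_rank a b C"
proof -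
  obtain D where D: "is_snf a b C D" and rank: "snf_rank a b C = card {i. i < min a b \<and> D i i \<noteq> 0}"
    using snf_rankE[OF tot] by blast
  obtain P Q where PQ: "inv_mat a P" "inv_mat b Q" "fmat_eq a b D (fmat_mult b (fmat_mult a P C) Q)"
    using D unfolding is_snf_iff_fmat_equiv fmat_equiv_def by blast
  have diag: "\<forall>u<a. \<forall>v<b. u \<noteq> v \<longrightarrow> D u v = 0"
    using D unfolding is_snf_iff_fmat_equiv by blast
  obtain P' where P': "fmat_eq a a (fmat_mult a P' P) fmat_one"
    using PQ(1) inv_mat_iff_fmat by blast
  have "fmat_eq a b D (fmat_mult a P (fmat_mult b C Q))"
    using PQ(3) by (simp add: fmat_mult_assoc)
  then have "fmat_eq a b (fmat_mult a P' D) (fmat_mult b C Q)"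
    by (rule fmat_eq_cancel_left[OF _ P'])
  then have "nonzero_cols a b (fmat_mult b C Q) = nonzero_cols a b (fmat_mult a P' D)"
    by (simp add: nonzero_cols_cong)
  also have "\<dots> \<subseteq> {i. i < min a b \<and> D i i \<noteq> 0}"
    unfolding nonzero_cols_def by (auto simp: fmat_mult_diag_right[OF diag] split: if_splits)
  finally have "card (nonzero_cols a b (fmat_mult b C Q)) \<le> snf_rank a b C"
    unfolding rank by (rule card_mono[rotated]) simp
  then show ?thesis
    using PQ(2) by blast
qed

lemma r_ideal_add: "r_ideal N \<Longrightarrow> x \<in> N \<Longrightarrow> y \<in> N \<Longrightarrow> x + y \<in> N"
  by (simp add: r_ideal_def)

lemma r_ideal_mult_left: "r_ideal N \<Longrightarrow> x \<in> N \<Longrightarrow> y * x \<in> N"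
  by (simp add: r_ideal_def)

lemma r_ideal_mult_right: "r_ideal N \<Longrightarrow> x \<in> N \<Longrightarrow> x * y \<in> N"
  by (metis r_ideal_mult_left mult.commute)

lemma r_ideal_sum: "r_ideal N \<Longrightarrow> (\<And>x. x \<in> A \<Longrightarrow> f x \<in> N) \<Longrightarrow> sum f A \<in> N"
  by (induction A rule: infinite_finite_induct) (auto simp: r_ideal_def)

lemma r_ideal_prod_minus_one:
  assumes N: "r_ideal N" and "\<And>x. x \<in> A \<Longrightarrow> f x - 1 \<in> N"
  shows "prod f A - 1 \<in> N"
  using assms(2)
proof (induction A rule: infinite_finite_induct)
  case (insert x F)
  have "(f x - 1) * prod f F \<in> N"
    using insert.prems N by (simp add: r_ideal_mult_right)
  moreover have "prod f F - 1 \<in> N"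
    using insert by simp
  ultimately have "(f x - 1) * prod f F + (prod f F - 1) \<in> N"
    by (rule r_ideal_add[OF N])
  moreover have "prod f (insert x F) - 1 = (f x - 1) * prod f F + (prod f F - 1)"
    using insert(1,2) by (simp add: algebra_simps)
  ultimately show ?case
    by (simp only:)
qed (use N in \<open>auto simp: r_ideal_def\<close>)

lemma det_minus_one_mem_r_ideal:
  fixes M :: "'r::comm_ring_1 mat"
  assumes N: "r_ideal N" and M: "M \<in> carrier_mat n n"
    and entries: "\<And>i j. i < n \<Longrightarrow> j < n \<Longrightarrow> M $$ (i, j) - (if i = j then 1 else 0) \<in> N"
  shows "det M - 1 \<in> N"
proof -
  let ?P = "{p. p permutes {0..<n}}"
  let ?t = "\<lambda>p. signof p * (\<Prod>i = 0..<n. M $$ (i, p i))"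
  have "det M = ?t id + sum ?t (?P - {id})"
    unfolding det_def'[OF M] by (rule sum.remove) (simp_all add: finite_permutations permutes_id)
  then have split: "det M - 1 = (?t id - 1) + sum ?t (?P - {id})"
    by (simp add: algebra_simps)
  have "(\<Prod>i = 0..<n. M $$ (i, i)) - 1 \<in> N"
  proof (rule r_ideal_prod_minus_one[OF N])
    fix i
    assume "i \<in> {0..<n}"
    then show "M $$ (i, i) - 1 \<in> N"
      using entries[of i i] by simp
  qed
  then have "?t id - 1 \<in> N"
    by (simp add: signof_id)
  moreover have "?t p \<in> N" if p: "p permutes {0..<n}" "p \<noteq> id" for p
  proof -
    obtain i where i: "p i \<noteq> i"
      using p(2) by (auto simp: fun_eq_iff)
    then have "i < n" "p i < n"
      using p(1) by (metis atLeastLessThan_iff permutes_not_in permutes_in_image zero_le)+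
    then have "M $$ (i, p i) \<in> N"
      using entries[of i "p i"] i by simp
    moreover have "(\<Prod>j = 0..<n. M $$ (j, p j)) = M $$ (i, p i) * (\<Prod>j \<in> {0..<n} - {i}. M $$ (j, p j))"
      using \<open>i < n\<close> by (simp add: prod.remove)
    ultimately show ?thesis
      using N by (simp add: r_ideal_mult_left r_ideal_mult_right)
  qed
  then have "sum ?t (?P - {id}) \<in> N"
    using N by (intro r_ideal_sum) auto
  ultimately show ?thesis
    unfolding split by (rule r_ideal_add[OF N])
qed

lemma det_zero_row:
  fixes M :: "'r::comm_ring_1 mat"
  assumes M: "M \<in> carrier_mat n n" and w: "w < n" and zero: "\<And>j. j < n \<Longrightarrow> M $$ (w, j) = 0"
  shows "det M = 0"
proof -
  have "(\<Prod>i = 0..<n. M $$ (i, p i)) = 0" if "p permutes {0..<n}" for p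
  proof -
    have "p w < n"
      using that w by (meson atLeastLessThan_iff permutes_in_image zero_le)
    then show ?thesis
      using w zero[OF \<open>p w < n\<close>] by (intro prod_zero bexI[of _ w]) auto
  qed
  then show ?thesis
    unfolding det_def'[OF M] by simp
qed

text \<open>If \<open>X Y\<close> is the identity modulo a proper ideal, then pad \<open>X\<close> and \<open>Y\<close> to square matrices of
  size \<open>|I|\<close>: for \<open>|W| < |I|\<close> the padded \<open>Y\<close> has a zero row, so \<open>det (X Y) = 0\<close>, whereas
  \<open>det (X Y) \<equiv> 1\<close> modulo the ideal.\<close>

lemma card_le_if_mult_eq_one_mod:
  fixes X :: "'i \<Rightarrow> 'w \<Rightarrow> 'r::comm_ring_1"
  assumes N: "r_ideal N" "1 \<notin> N" and I: "finite I" and W: "finite W"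
    and XY: "\<And>i i'. i \<in> I \<Longrightarrow> i' \<in> I \<Longrightarrow> (\<Sum>t\<in>W. X i t * Y t i') - (if i = i' then 1 else 0) \<in> N"
  shows "card I \<le> card W"
proof (rule ccontr)
  assume "\<not> card I \<le> card W"
  then have wr: "card W < card I" by simp
  define r where "r = card I"
  define w where "w = card W"
  obtain eI where eI: "bij_betw eI {0..<r} I"
    using ex_bij_betw_nat_finite[OF I] r_def by blast
  obtain eW where eW: "bij_betw eW {0..<w} W"
    using ex_bij_betw_nat_finite[OF W] w_def by blast
  define X' :: "'r mat" where "X' = mat r r (\<lambda>(i, l). if l < w then X (eI i) (eW l) else 0)"
  define Y' :: "'r mat" where "Y' = mat r r (\<lambda>(l, i). if l < w then Y (eW l) (eI i) else 0)"
  have wr: "w < r"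
    using wr r_def w_def by simp
  have X': "X' \<in> carrier_mat r r" and Y': "Y' \<in> carrier_mat r r"
    by (auto simp: X'_def Y'_def)
  have "det (X' * Y') = 0"
    using det_mult[OF X' Y'] det_zero_row[OF Y' wr] by (simp add: Y'_def wr)
  moreover have "(X' * Y') $$ (i, i') = (\<Sum>t\<in>W. X (eI i) t * Y t (eI i'))" if "i < r" "i' < r" for i i'
  proof -
    have "(X' * Y') $$ (i, i') = (\<Sum>l\<in>{0..<r}. X' $$ (i, l) * Y' $$ (l, i'))"
      using that X' Y' by (simp add: scalar_prod_def)
    also have "\<dots> = (\<Sum>l\<in>{0..<r}. if l < w then X (eI i) (eW l) * Y (eW l) (eI i') else 0)"
      using that by (intro sum.cong) (auto simp: X'_def Y'_def)
    also have "\<dots> = (\<Sum>l\<in>{0..<w}. X (eI i) (eW l) * Y (eW l) (eI i'))"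
    proof -
      have "{l. l < r \<and> l < w} = {0..<w}"
        using wr by auto
      then show ?thesis
        by (simp add: sum.If_cases Int_def)
    qed
    also have "\<dots> = (\<Sum>t\<in>W. X (eI i) t * Y t (eI i'))"
      using sum.reindex_bij_betw[OF eW] by simp
    finally show ?thesis .
  qed
  then have "det (X' * Y') - 1 \<in> N"
  proof (intro det_minus_one_mem_r_ideal[OF N(1)])
    fix i j
    assume ij: "i < r" "j < r"
    then have "eI i \<in> I" "eI j \<in> I" "eI i = eI j \<longleftrightarrow> i = j"
      using eI unfolding bij_betw_def inj_on_def by auto
    then show "(X' * Y') $$ (i, j) - (if i = j then 1 else 0) \<in> N"
      using XY[of "eI i" "eI j"] \<open>\<And>i i'. _ \<Longrightarrow> _ \<Longrightarrow> (X' * Y') $$ (i, i') = _\<close>[OF ij] by simp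
  qed (use X' Y' in simp)
  ultimately have "- 1 \<in> N"
    by simp
  then show False
    using N r_ideal_mult_left[OF N(1), of "-1" "-1"] by simp
qed

lemma chain_ring_dvd_total:
  assumes "chain_ring TYPE('r::comm_ring_1)"
  shows "\<forall>x y::'r. x dvd y \<or> y dvd x"
proof (intro allI)
  fix x y :: 'r
  have principal: "r_ideal (range (\<lambda>r. r * z))" for z :: 'r
    unfolding r_ideal_def
  proof (intro conjI ballI allI)
    show "0 \<in> range (\<lambda>r. r * z)"
      by (rule range_eqI[where x=0]) simp
  next
    fix u v
    assume "u \<in> range (\<lambda>r. r * z)" "v \<in> range (\<lambda>r. r * z)"
    then obtain r s where "u = r * z" "v = s * z"
      by auto
    then show "u + v \<in> range (\<lambda>r. r * z)"
      by (intro range_eqI[where x="r + s"]) (simp add: algebra_simps)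
  next
    fix t u
    assume "u \<in> range (\<lambda>r. r * z)"
    then obtain r where "u = r * z"
      by auto
    then show "t * u \<in> range (\<lambda>r. r * z)"
      by (intro range_eqI[where x="t * r"]) (simp add: algebra_simps)
  qed
  then have "range (\<lambda>r. r * x) \<subseteq> range (\<lambda>r. r * y) \<or> range (\<lambda>r. r * y) \<subseteq> range (\<lambda>r. r * x)"
    using assms unfolding chain_ring_def by blast
  moreover have "x \<in> range (\<lambda>r. r * x)" "y \<in> range (\<lambda>r. r * y)"
    by (auto intro: range_eqI[where x=1])
  ultimately show "x dvd y \<or> y dvd x"
    by (auto simp: dvd_def mult.commute)
qed

lemma chain_ring_zero_neq_one: "chain_ring TYPE('r::comm_ring_1) \<Longrightarrow> (0::'r) \<noteq> 1"
  by (simp add: chain_ring_def)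

lemma r_ideal_nonunits:
  assumes tot: "\<forall>x y::'r::comm_ring_1. x dvd y \<or> y dvd x" and "(0::'r) \<noteq> 1"
  shows "r_ideal {x::'r. \<not> x dvd 1}"
  unfolding r_ideal_def
proof (intro conjI ballI allI)
  show "(0::'r) \<in> {x. \<not> x dvd 1}"
    using assms(2) by simp
next
  fix x y :: 'r
  assume "x \<in> {x. \<not> x dvd 1}" "y \<in> {x. \<not> x dvd 1}"
  moreover have "x dvd x + y \<or> y dvd x + y"
    using tot by auto
  ultimately show "x + y \<in> {x. \<not> x dvd 1}"
    using dvd_trans[of x "x + y" 1] dvd_trans[of y "x + y" 1] by blast
next
  fix r x :: 'r
  assume "x \<in> {x. \<not> x dvd 1}"
  then show "r * x \<in> {x. \<not> x dvd 1}"
    by (auto dest: dvd_mult_right)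
qed

text \<open>Reduction modulo the non-units: the rows \<open>Z\<close> of the inverse \<open>Q'\<close> of \<open>Q\<close>, restricted to the
  columns \<open>W\<close>, still have a right inverse modulo this ideal.\<close>

lemma card_le_if_inverse_nonunit_outside:
  fixes Q Q' :: "nat \<Rightarrow> nat \<Rightarrow> 'r::comm_ring_1"
  assumes tot: "\<forall>x y::'r. x dvd y \<or> y dvd x" and "(0::'r) \<noteq> 1"
    and inv: "fmat_eq b b (fmat_mult b Q' Q) fmat_one"
    and Z: "Z \<subseteq> {..<b}" and W: "W \<subseteq> {..<b}"
    and outside: "\<And>i t. i \<in> Z \<Longrightarrow> t < b \<Longrightarrow> t \<notin> W \<Longrightarrow> \<not> Q' i t dvd 1"
  shows "card Z \<le> card W"
proof (rule card_le_if_mult_eq_one_mod[where N = "{x. \<not> x dvd 1}"])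
  let ?N = "{x::'r. \<not> x dvd 1}"
  show N: "r_ideal ?N" "1 \<notin> ?N"
    using r_ideal_nonunits[OF assms(1,2)] by auto
  show "finite Z" "finite W"
    using Z W finite_subset by blast+
  fix i i'
  assume "i \<in> Z" "i' \<in> Z"
  then have "i < b" "i' < b"
    using Z by auto
  then have "(\<Sum>t<b. Q' i t * Q t i') = (if i = i' then 1 else 0)"
    using inv unfolding fmat_eq_def fmat_mult_def fmat_one_def by simp
  moreover have "(\<Sum>t<b. Q' i t * Q t i') = (\<Sum>t\<in>W. Q' i t * Q t i') + (\<Sum>t\<in>{..<b} - W. Q' i t * Q t i')"
    using sum.subset_diff[OF W] by (simp add: add.commute)
  moreover have "(\<Sum>t\<in>{..<b} - W. Q' i t * Q t i') \<in> ?N"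
    using outside[OF \<open>i \<in> Z\<close>] by (intro r_ideal_sum[OF N(1)] r_ideal_mult_right[OF N(1)]) auto
  ultimately show "(\<Sum>t\<in>W. Q' i t * Q t i') - (if i = i' then 1 else 0) \<in> ?N"
    using r_ideal_mult_left[OF N(1), of _ "-1"] by (simp add: algebra_simps)
qed

lemma snf_rank_le_card_nonzero_cols:
  fixes C :: "nat \<Rightarrow> nat \<Rightarrow> 'r::comm_ring_1"
  assumes tot: "\<forall>x y::'r. x dvd y \<or> y dvd x" and "(0::'r) \<noteq> 1"
  shows "snf_rank a b C \<le> card (nonzero_cols a b C)"
proof -
  obtain D where D: "is_snf a b C D" and rank: "snf_rank a b C = card {i. i < min a b \<and> D i i \<noteq> 0}"
    using snf_rankE[OF tot] by blast
  obtain P Q where PQ: "inv_mat a P" "inv_mat b Q" "fmat_eq a b D (fmat_mult b (fmat_mult a P C) Q)"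
    using D unfolding is_snf_iff_fmat_equiv fmat_equiv_def by blast
  have diag: "\<forall>u<a. \<forall>v<b. u \<noteq> v \<longrightarrow> D u v = 0"
    using D unfolding is_snf_iff_fmat_equiv by blast
  obtain Q' where Q': "fmat_eq b b (fmat_mult b Q Q') fmat_one" "fmat_eq b b (fmat_mult b Q' Q) fmat_one"
    using PQ(2) inv_mat_iff_fmat by blast
  have DQ': "fmat_eq a b (fmat_mult b D Q') (fmat_mult a P C)"
    by (rule fmat_eq_cancel_right[OF PQ(3) Q'(1)])
  have "card {i. i < min a b \<and> D i i \<noteq> 0} \<le> card (nonzero_cols a b C)"
  proof (rule card_le_if_inverse_nonunit_outside[OF assms Q'(2)])
    fix i t
    assume i: "i \<in> {i. i < min a b \<and> D i i \<noteq> 0}" and t: "t < b" "t \<notin> nonzero_cols a b C"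
    then have "fmat_mult a P C i t = 0"
      unfolding fmat_mult_def nonzero_cols_def by auto
    then have "D i i * Q' i t = 0"
      using DQ' i t(1) fmat_mult_diag_left[OF diag, of i Q' t] unfolding fmat_eq_def by auto
    show "\<not> Q' i t dvd 1"
    proof
      assume "Q' i t dvd 1"
      then obtain e where "1 = Q' i t * e"
        by (auto elim: dvdE)
      then have "D i i = D i i * Q' i t * e"
        by (simp add: mult.assoc)
      then show False
        using \<open>D i i * Q' i t = 0\<close> i by simp
    qed
  qed (auto simp: nonzero_cols_def)
  then show ?thesis
    using rank by simp
qed

section \<open>Coordinates in \<open>S\<close> and the rank of vectors\<close>

lemma S_set_zero: "0 < degree h \<Longrightarrow> 0 \<in> S_set h"
  by (simp add: S_set_def)

lemma S_set_diff: "p \<in> S_set h \<Longrightarrow> q \<in> S_set h \<Longrightarrow> p - q \<in> S_set h"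
  by (simp add: S_set_def degree_diff_less)

lemma vec_mat_in_S_set:
  assumes "0 < degree h" "\<And>t. t < n \<Longrightarrow> c t \<in> S_set h"
  shows "vec_mat n c M j \<in> S_set h"
  using assms degree_sum_less[of "{..<n}" "\<lambda>t. Polynomial.smult (M t j) (c t)" "degree h"]
  unfolding vec_mat_def S_set_def by (auto intro: le_less_trans[OF degree_smult_le])

lemma coords_spec:
  assumes "is_R_basis h \<alpha>" "p \<in> S_set h"
  shows "(\<forall>k\<ge>degree h. coords h \<alpha> p k = 0) \<and> p = (\<Sum>k<degree h. Polynomial.smult (coords h \<alpha> p k) (\<alpha> k))"
proof -
  have "\<exists>c. (\<forall>k\<ge>degree h. c k = 0) \<and> p = (\<Sum>k<degree h. Polynomial.smult (c k) (\<alpha> k))"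
    using assms unfolding is_R_basis_def by blast
  then show ?thesis
    unfolding coords_def by (rule someI_ex)
qed

lemma coords_unique:
  assumes "is_R_basis h \<alpha>" "p \<in> S_set h"
    and "\<forall>k\<ge>degree h. c k = 0" "p = (\<Sum>k<degree h. Polynomial.smult (c k) (\<alpha> k))"
  shows "coords h \<alpha> p = c"
  using assms coords_spec[OF assms(1,2)] unfolding is_R_basis_def by blast

lemma coords_eq_0_iff:
  assumes "is_R_basis h \<alpha>" "p \<in> S_set h"
  shows "(\<forall>i<degree h. coords h \<alpha> p i = 0) \<longleftrightarrow> p = 0"
proof
  assume "\<forall>i<degree h. coords h \<alpha> p i = 0"
  then show "p = 0"
    using coords_spec[OF assms] by simp
next
  assume "p = 0"
  then have "coords h \<alpha> p = (\<lambda>_. 0)"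
    using assms by (intro coords_unique) auto
  then show "\<forall>i<degree h. coords h \<alpha> p i = 0"
    by simp
qed

lemma smult_sum_right: "Polynomial.smult c (sum f A) = (\<Sum>x\<in>A. Polynomial.smult c (f x))"
  by (induct A rule: infinite_finite_induct) (auto simp: smult_add_right)

lemma coords_vec_mat:
  assumes B: "is_R_basis h \<alpha>" and d: "0 < degree h" and u: "\<And>t. t < s \<Longrightarrow> u t \<in> S_set h"
    and j: "j < s"
  shows "coords h \<alpha> (vec_mat s u A j) i = (\<Sum>t<s. coords h \<alpha> (u t) i * A t j)"
proof -
  have "coords h \<alpha> (vec_mat s u A j) = (\<lambda>i. \<Sum>t<s. coords h \<alpha> (u t) i * A t j)"
  proof (rule coords_unique[OF B vec_mat_in_S_set[OF d u]])
    show "\<forall>k\<ge>degree h. (\<Sum>t<s. coords h \<alpha> (u t) k * A t j) = 0"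
      using coords_spec[OF B u] by simp
    have "vec_mat s u A j =
        (\<Sum>t<s. Polynomial.smult (A t j) (\<Sum>k<degree h. Polynomial.smult (coords h \<alpha> (u t) k) (\<alpha> k)))"
      unfolding vec_mat_def using j coords_spec[OF B u] by (auto intro: sum.cong)
    also have "\<dots> = (\<Sum>t<s. \<Sum>k<degree h. Polynomial.smult (coords h \<alpha> (u t) k * A t j) (\<alpha> k))"
      by (simp add: smult_sum_right mult.commute)
    also have "\<dots> = (\<Sum>k<degree h. \<Sum>t<s. Polynomial.smult (coords h \<alpha> (u t) k * A t j) (\<alpha> k))"
      by (rule sum.swap)
    also have "\<dots> = (\<Sum>k<degree h. Polynomial.smult (\<Sum>t<s. coords h \<alpha> (u t) k * A t j) (\<alpha> k))"
      by (simp add: smult_sum)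
    finally show "vec_mat s u A j =
        (\<Sum>k<degree h. Polynomial.smult (\<Sum>t<s. coords h \<alpha> (u t) k * A t j) (\<alpha> k))" .
  qed
  then show ?thesis
    by simp
qed

definition coord_fmat :: "'r::comm_ring_1 poly \<Rightarrow> (nat \<Rightarrow> 'r poly) \<Rightarrow> (nat \<Rightarrow> 'r poly) \<Rightarrow> nat \<Rightarrow> nat \<Rightarrow> 'r"
  where "coord_fmat h \<alpha> u i j = coords h \<alpha> (u j) i"

lemma rk_eq_snf_rank: "rk h \<alpha> s u = snf_rank (degree h) s (coord_fmat h \<alpha> u)"
  unfolding rk_def coord_fmat_def ..

definition wt_H :: "nat \<Rightarrow> (nat \<Rightarrow> 'a::zero) \<Rightarrow> nat"
  where "wt_H n c = card {j. j < n \<and> c j \<noteq> 0}"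

lemma card_nonzero_cols_coord_fmat:
  assumes "is_R_basis h \<alpha>" "\<And>t. t < s \<Longrightarrow> u t \<in> S_set h"
  shows "card (nonzero_cols (degree h) s (coord_fmat h \<alpha> u)) = wt_H s u"
proof -
  have "nonzero_cols (degree h) s (coord_fmat h \<alpha> u) = {j. j < s \<and> u j \<noteq> 0}"
    unfolding nonzero_cols_def coord_fmat_def using coords_eq_0_iff[OF assms(1)] assms(2) by blast
  then show ?thesis
    by (simp add: wt_H_def)
qed

lemma coord_fmat_vec_mat:
  assumes "is_R_basis h \<alpha>" "0 < degree h" "\<And>t. t < s \<Longrightarrow> u t \<in> S_set h"
  shows "fmat_eq (degree h) s (coord_fmat h \<alpha> (vec_mat s u A)) (fmat_mult s (coord_fmat h \<alpha> u) A)"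
  unfolding fmat_eq_def coord_fmat_def fmat_mult_def using coords_vec_mat[OF assms] by simp

lemma rk_cong:
  assumes "\<And>j. j < s \<Longrightarrow> u j = v j"
  shows "rk h \<alpha> s u = rk h \<alpha> s v"
  unfolding rk_eq_snf_rank
  by (intro snf_rank_fmat_equiv fmat_eq_imp_fmat_equiv) (simp add: fmat_eq_def coord_fmat_def assms)

lemma rk_vec_mat:
  assumes "is_R_basis h \<alpha>" "0 < degree h" "\<And>t. t < s \<Longrightarrow> u t \<in> S_set h" and A: "inv_mat s A"
  shows "rk h \<alpha> s (vec_mat s u A) = rk h \<alpha> s u"
proof -
  have "rk h \<alpha> s (vec_mat s u A) = snf_rank (degree h) s (fmat_mult s (coord_fmat h \<alpha> u) A)"
    unfolding rk_eq_snf_rank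
    by (intro snf_rank_fmat_equiv fmat_eq_imp_fmat_equiv coord_fmat_vec_mat[OF assms(1-3)])
  then show ?thesis
    unfolding rk_eq_snf_rank snf_rank_mult_right[OF A] .
qed

lemma rk_le_wt_H:
  assumes "chain_ring TYPE('r::comm_ring_1)" "is_R_basis h \<alpha>"
    and "\<And>t. t < s \<Longrightarrow> (u t :: 'r poly) \<in> S_set h"
  shows "rk h \<alpha> s u \<le> wt_H s u"
proof -
  have "rk h \<alpha> s u \<le> card (nonzero_cols (degree h) s (coord_fmat h \<alpha> u))"
    unfolding rk_eq_snf_rank using assms(1)
    by (intro snf_rank_le_card_nonzero_cols chain_ring_dvd_total chain_ring_zero_neq_one)
  then show ?thesis
    using card_nonzero_cols_coord_fmat[OF assms(2,3)] by simp
qed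

lemma ex_inv_mat_wt_H_le_rk:
  assumes "chain_ring TYPE('r::comm_ring_1)" "is_R_basis h \<alpha>" "0 < degree h"
    and u: "\<And>t. t < s \<Longrightarrow> (u t :: 'r poly) \<in> S_set h"
  shows "\<exists>A. inv_mat s A \<and> wt_H s (vec_mat s u A) \<le> rk h \<alpha> s u"
proof -
  obtain A where A: "inv_mat s A"
    and le: "card (nonzero_cols (degree h) s (fmat_mult s (coord_fmat h \<alpha> u) A)) \<le> rk h \<alpha> s u"
    using ex_inv_mat_card_nonzero_cols_le_snf_rank[OF chain_ring_dvd_total[OF assms(1)]]
    unfolding rk_eq_snf_rank by blast
  have "wt_H s (vec_mat s u A) = card (nonzero_cols (degree h) s (coord_fmat h \<alpha> (vec_mat s u A)))"
    using card_nonzero_cols_coord_fmat[OF assms(2) vec_mat_in_S_set[OF assms(3) u]] by simp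
  also have "\<dots> = card (nonzero_cols (degree h) s (fmat_mult s (coord_fmat h \<alpha> u) A))"
    using nonzero_cols_cong[OF coord_fmat_vec_mat[OF assms(2,3) u]] by simp
  finally show ?thesis
    using A le by auto
qed

section \<open>Blocks and the sum-rank weight\<close>

abbreviation inv_blocks :: "nat list \<Rightarrow> (nat \<Rightarrow> nat \<Rightarrow> nat \<Rightarrow> 'r::comm_ring_1) \<Rightarrow> bool"
  where "inv_blocks ns As \<equiv> \<forall>i<length ns. inv_mat (ns ! i) (As i)"

lemma offs_Suc: "i < length ns \<Longrightarrow> offs ns (Suc i) = offs ns i + ns ! i"
  by (simp add: offs_def take_Suc_conv_app_nth)

lemma offs_mono:
  assumes "i \<le> j" shows "offs ns i \<le> offs ns j"
proof -
  have "take j ns = take i ns @ drop i (take j ns)"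
    using assms by (metis append_take_drop_id min.absorb1 take_take)
  then show ?thesis
    unfolding offs_def by (metis le_add1 sum_list_append)
qed

lemma offs_add_le_sum_list:
  assumes "i < length ns" shows "offs ns i + ns ! i \<le> sum_list ns"
proof -
  have "offs ns (Suc i) \<le> offs ns (length ns)"
    using assms by (intro offs_mono) simp
  then show ?thesis
    by (simp add: offs_Suc[OF assms] offs_def[of ns "length ns"])
qed

lemma blocks_disjoint:
  assumes "i < length ns" "i' < length ns" "offs ns i \<le> t" "t < offs ns i + ns ! i"
    "offs ns i' \<le> t" "t < offs ns i' + ns ! i'"
  shows "i = i'"
proof (rule ccontr)
  assume "i \<noteq> i'"
  then consider "Suc i \<le> i'" | "Suc i' \<le> i"
    by linarith
  then show False
    by cases (use assms offs_mono[of "Suc i" i' ns] offs_mono[of "Suc i'" i ns] offs_Suc in fastforce)+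
qed

lemma ex_block_index:
  "t < sum_list ns \<Longrightarrow> \<exists>i j. i < length ns \<and> j < ns ! i \<and> t = offs ns i + j"
proof (induction ns arbitrary: t)
  case (Cons n0 ns)
  show ?case
  proof (cases "t < n0")
    case True
    then show ?thesis
      by (intro exI[of _ 0] exI[of _ t]) (simp add: offs_def)
  next
    case False
    then have "t - n0 < sum_list ns"
      using Cons.prems by simp
    then obtain i j where "i < length ns" "j < ns ! i" "t - n0 = offs ns i + j"
      using Cons.IH by blast
    then show ?thesis
      using False by (intro exI[of _ "Suc i"] exI[of _ j]) (simp add: offs_def)
  qed
qed simp

lemma card_less_add:
  "card {j. j < a + b \<and> P j} = card {j. j < a \<and> P j} + card {j::nat. j < b \<and> P (a + j)}"
proof -
  have split: "{j. j < a + b \<and> P j} = {j. j < a \<and> P j} \<union> {j. a \<le> j \<and> j < a + b \<and> P j}"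
    by auto
  have "card {j. j < a + b \<and> P j} = card {j. j < a \<and> P j} + card {j. a \<le> j \<and> j < a + b \<and> P j}"
    unfolding split by (rule card_Un_disjoint) auto
  moreover have "bij_betw (\<lambda>j. a + j) {j. j < b \<and> P (a + j)} {j. a \<le> j \<and> j < a + b \<and> P j}"
    by (rule bij_betw_byWitness[where f'="\<lambda>j. j - a"]) auto
  then have "card {j. j < b \<and> P (a + j)} = card {j. a \<le> j \<and> j < a + b \<and> P j}"
    by (rule bij_betw_same_card)
  ultimately show ?thesis
    by simp
qed

lemma card_blocks:
  "card {j. j < sum_list ns \<and> P j} = (\<Sum>i<length ns. card {j. j < ns ! i \<and> P (offs ns i + j)})"
proof (induction ns arbitrary: P)
  case (Cons n0 ns)
  have "card {j. j < sum_list (n0 # ns) \<and> P j} =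
      card {j. j < n0 \<and> P j} + (\<Sum>i<length ns. card {j. j < ns ! i \<and> P (n0 + (offs ns i + j))})"
    using card_less_add[of n0 "sum_list ns" P] Cons.IH[of "\<lambda>j. P (n0 + j)"] by simp
  then show ?case
    unfolding length_Cons sum.lessThan_Suc_shift by (simp add: offs_def add.assoc)
qed simp

lemma wt_H_blocks: "wt_H (sum_list ns) c = (\<Sum>i<length ns. wt_H (ns ! i) (\<lambda>j. c (offs ns i + j)))"
  unfolding wt_H_def by (rule card_blocks)

lemma block_diag_block:
  assumes i: "i < length ns" and j: "j < ns ! i"
  shows "block_diag ns As t (offs ns i + j) =
    (if offs ns i \<le> t \<and> t < offs ns i + ns ! i then As i (t - offs ns i) j else 0)"
proof -
  let ?f = "\<lambda>i'. if offs ns i' \<le> t \<and> t < offs ns i' + ns ! i' \<and>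
      offs ns i' \<le> offs ns i + j \<and> offs ns i + j < offs ns i' + ns ! i'
    then As i' (t - offs ns i') (offs ns i + j - offs ns i') else 0"
  have "block_diag ns As t (offs ns i + j) = ?f i + sum ?f ({..<length ns} - {i})"
    unfolding block_diag_def using i by (intro sum.remove) auto
  moreover have "?f i' = 0" if "i' \<in> {..<length ns} - {i}" for i'
  proof -
    have "\<not> (offs ns i' \<le> offs ns i + j \<and> offs ns i + j < offs ns i' + ns ! i')"
      using that j blocks_disjoint[OF i, of i' "offs ns i + j"] by auto
    then show ?thesis
      by auto
  qed
  ultimately show ?thesis
    using j by simp
qed

lemma vec_mat_block_diag:
  assumes i: "i < length ns" and j: "j < ns ! i"
  shows "vec_mat (sum_list ns) c (block_diag ns As) (offs ns i + j) =
    vec_mat (ns ! i) (\<lambda>j. c (offs ns i + j)) (As i) j"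
proof -
  let ?o = "offs ns i" and ?s = "ns ! i"
  have le: "?o + ?s \<le> sum_list ns"
    by (rule offs_add_le_sum_list[OF i])
  have "vec_mat (sum_list ns) c (block_diag ns As) (?o + j) =
      (\<Sum>t<sum_list ns. if ?o \<le> t \<and> t < ?o + ?s then Polynomial.smult (As i (t - ?o) j) (c t) else 0)"
    unfolding vec_mat_def using le j by (auto simp: block_diag_block[OF i j] intro: sum.cong)
  also have "\<dots> = (\<Sum>t\<in>{?o..<?o + ?s}. Polynomial.smult (As i (t - ?o) j) (c t))"
    using le by (intro sum.mono_neutral_cong_right) auto
  also have "\<dots> = (\<Sum>t<?s. Polynomial.smult (As i t j) (c (?o + t)))"
    by (rule sum.reindex_bij_witness[of _ "\<lambda>t. ?o + t" "\<lambda>t. t - ?o"]) auto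
  finally show ?thesis
    unfolding vec_mat_def using j by simp
qed

lemma block_in_S_set:
  "(\<And>t. t < sum_list ns \<Longrightarrow> c t \<in> S_set h) \<Longrightarrow> i < length ns \<Longrightarrow> j < ns ! i \<Longrightarrow> c (offs ns i + j) \<in> S_set h"
  using offs_add_le_sum_list[of i ns] by simp

lemma vec_mat_diff: "vec_mat n c M j - vec_mat n d M j = vec_mat n (\<lambda>j. c j - d j) M j"
  unfolding vec_mat_def by (simp add: sum_subtractf[symmetric] smult_diff_right)

lemma vec_mat_vec_mat:
  "j < n \<Longrightarrow> vec_mat n (vec_mat n u A) B j = vec_mat n u (fmat_mult n A B) j"
proof -
  assume j: "j < n"
  have "vec_mat n (vec_mat n u A) B j = (\<Sum>t<n. \<Sum>l<n. Polynomial.smult (B t j * A l t) (u l))"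
    unfolding vec_mat_def using j by (simp add: smult_sum_right)
  also have "\<dots> = (\<Sum>l<n. Polynomial.smult (\<Sum>t<n. A l t * B t j) (u l))"
    by (subst sum.swap) (simp add: smult_sum mult.commute)
  finally show ?thesis
    unfolding vec_mat_def fmat_mult_def using j by simp
qed

lemma vec_mat_fmat_one: "j < n \<Longrightarrow> vec_mat n u fmat_one j = u j"
  unfolding vec_mat_def fmat_one_def by (simp add: if_distrib[of "\<lambda>x. Polynomial.smult x _"] cong: if_cong)

lemma vec_mat_cong: "fmat_eq n n A B \<Longrightarrow> vec_mat n u A = vec_mat n u B"
  unfolding vec_mat_def fmat_eq_def by (auto intro!: sum.cong)

lemma vec_mat_eq_0_imp_eq_0:
  assumes "inv_mat s A" and zero: "\<And>j. j < s \<Longrightarrow> vec_mat s u A j = 0" and t: "t < s"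
  shows "u t = 0"
proof -
  obtain B where B: "fmat_eq s s (fmat_mult s A B) fmat_one"
    using assms(1) inv_mat_iff_fmat by blast
  have "u t = vec_mat s u fmat_one t"
    by (rule vec_mat_fmat_one[OF t, symmetric])
  also have "\<dots> = vec_mat s u (fmat_mult s A B) t"
    using vec_mat_cong[OF B] by simp
  also have "\<dots> = vec_mat s (vec_mat s u A) B t"
    by (rule vec_mat_vec_mat[OF t, symmetric])
  also have "\<dots> = (\<Sum>t'<s. Polynomial.smult (B t' t) (vec_mat s u A t'))"
    unfolding vec_mat_def[of s "vec_mat s u A"] using t by simp
  also have "\<dots> = 0"
    using zero by (intro sum.neutral) simp
  finally show ?thesis .
qed

lemma inj_on_vec_mat_block_diag:
  assumes As: "inv_blocks ns As"
  shows "inj_on (\<lambda>c. vec_mat (sum_list ns) c (block_diag ns As)) (Sn h (sum_list ns))"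
proof (rule inj_onI, rule ext)
  fix c d t
  assume cd: "c \<in> Sn h (sum_list ns)" "d \<in> Sn h (sum_list ns)"
    and eq: "vec_mat (sum_list ns) c (block_diag ns As) = vec_mat (sum_list ns) d (block_diag ns As)"
  show "c t = d t"
  proof (cases "t < sum_list ns")
    case True
    then obtain i j where ij: "i < length ns" "j < ns ! i" "t = offs ns i + j"
      using ex_block_index by blast
    have "vec_mat (ns ! i) (\<lambda>j. c (offs ns i + j) - d (offs ns i + j)) (As i) j' = 0"
      if "j' < ns ! i" for j'
    proof -
      have "vec_mat (ns ! i) (\<lambda>j. c (offs ns i + j) - d (offs ns i + j)) (As i) j' =
          vec_mat (sum_list ns) (\<lambda>j. c j - d j) (block_diag ns As) (offs ns i + j')"
        using vec_mat_block_diag[OF ij(1) that, of "\<lambda>j. c j - d j" As] by simp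
      also have "\<dots> = 0"
        using vec_mat_diff[of "sum_list ns" c "block_diag ns As" "offs ns i + j'" d] eq by simp
      finally show ?thesis .
    qed
    then have "c (offs ns i + j) - d (offs ns i + j) = 0"
      using vec_mat_eq_0_imp_eq_0[OF As[rule_format, OF ij(1)] _ ij(2)] by blast
    then show ?thesis
      using ij(3) by simp
  next
    case False
    then show ?thesis
      using cd unfolding Sn_def by simp
  qed
qed

lemma wt_SR_vec_mat_block_diag:
  assumes "is_R_basis h \<alpha>" "0 < degree h" "inv_blocks ns As"
    and c: "\<And>t. t < sum_list ns \<Longrightarrow> c t \<in> S_set h"
  shows "wt_SR h \<alpha> ns (vec_mat (sum_list ns) c (block_diag ns As)) = wt_SR h \<alpha> ns c"
  unfolding wt_SR_def
proof (rule sum.cong[OF refl])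
  fix i
  assume "i \<in> {..<length ns}"
  then have i: "i < length ns"
    by simp
  have "rk h \<alpha> (ns ! i) (\<lambda>j. vec_mat (sum_list ns) c (block_diag ns As) (offs ns i + j)) =
      rk h \<alpha> (ns ! i) (vec_mat (ns ! i) (\<lambda>j. c (offs ns i + j)) (As i))"
    by (rule rk_cong) (simp add: vec_mat_block_diag[OF i])
  also have "\<dots> = rk h \<alpha> (ns ! i) (\<lambda>j. c (offs ns i + j))"
    using assms i block_in_S_set[of ns c h, OF c i] by (intro rk_vec_mat) auto
  finally show "rk h \<alpha> (ns ! i) (\<lambda>j. vec_mat (sum_list ns) c (block_diag ns As) (offs ns i + j)) =
      rk h \<alpha> (ns ! i) (\<lambda>j. c (offs ns i + j))" .
qed

lemma wt_SR_le_wt_H: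
  assumes "chain_ring TYPE('r::comm_ring_1)" "is_R_basis h \<alpha>"
    and c: "\<And>t. t < sum_list ns \<Longrightarrow> (c t :: 'r poly) \<in> S_set h"
  shows "wt_SR h \<alpha> ns c \<le> wt_H (sum_list ns) c"
  unfolding wt_SR_def wt_H_blocks
  using assms(1,2) block_in_S_set[of ns c h, OF c] by (intro sum_mono rk_le_wt_H) auto

lemma ex_block_diag_wt_H_le_wt_SR:
  assumes "chain_ring TYPE('r::comm_ring_1)" "is_R_basis h \<alpha>" "0 < degree h"
    and c: "\<And>t. t < sum_list ns \<Longrightarrow> (c t :: 'r poly) \<in> S_set h"
  shows "\<exists>As. inv_blocks ns As \<and>
    wt_H (sum_list ns) (vec_mat (sum_list ns) c (block_diag ns As)) \<le> wt_SR h \<alpha> ns c"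
proof -
  let ?c = "\<lambda>i j. c (offs ns i + j)"
  have "\<exists>A. inv_mat (ns ! i) A \<and> wt_H (ns ! i) (vec_mat (ns ! i) (?c i) A) \<le> rk h \<alpha> (ns ! i) (?c i)"
    if "i < length ns" for i
    using ex_inv_mat_wt_H_le_rk[OF assms(1-3), of "ns ! i" "?c i"] block_in_S_set[of ns c h, OF c that]
    by blast
  then have "\<forall>i. \<exists>A. i < length ns \<longrightarrow>
      inv_mat (ns ! i) A \<and> wt_H (ns ! i) (vec_mat (ns ! i) (?c i) A) \<le> rk h \<alpha> (ns ! i) (?c i)"
    by blast
  then obtain As where As: "\<forall>i. i < length ns \<longrightarrow>
      inv_mat (ns ! i) (As i) \<and> wt_H (ns ! i) (vec_mat (ns ! i) (?c i) (As i)) \<le> rk h \<alpha> (ns ! i) (?c i)"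
    by (rule choice[THEN exE]) blast
  have "wt_H (sum_list ns) (vec_mat (sum_list ns) c (block_diag ns As)) =
      (\<Sum>i<length ns. wt_H (ns ! i) (\<lambda>j. vec_mat (sum_list ns) c (block_diag ns As) (offs ns i + j)))"
    by (rule wt_H_blocks)
  also have "\<dots> = (\<Sum>i<length ns. wt_H (ns ! i) (vec_mat (ns ! i) (?c i) (As i)))"
    unfolding wt_H_def by (intro sum.cong refl arg_cong[where f = card]) (auto simp: vec_mat_block_diag)
  also have "\<dots> \<le> wt_SR h \<alpha> ns c"
    unfolding wt_SR_def using As by (intro sum_mono) auto
  finally show ?thesis
    using As by blast
qed

section \<open>Distances of codes\<close>

lemma finite_pairs_image: "finite D \<Longrightarrow> finite {f c e | c e. c \<in> D \<and> e \<in> D \<and> c \<noteq> e}"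
proof -
  assume "finite D"
  then have "finite ((\<lambda>(c, e). f c e) ` (D \<times> D))"
    by simp
  moreover have "{f c e | c e. c \<in> D \<and> e \<in> D \<and> c \<noteq> e} \<subseteq> (\<lambda>(c, e). f c e) ` (D \<times> D)"
    by force
  ultimately show ?thesis
    by (rule finite_subset[rotated])
qed

lemma d_H_le: "finite D \<Longrightarrow> c \<in> D \<Longrightarrow> e \<in> D \<Longrightarrow> c \<noteq> e \<Longrightarrow> d_H n D \<le> card {j. j < n \<and> c j \<noteq> e j}"
  unfolding d_H_def by (rule Min_le) (auto intro: finite_pairs_image)

lemma d_H_attained:
  assumes "finite D" "c \<in> D" "e \<in> D" "c \<noteq> e"
  obtains c' e' where "c' \<in> D" "e' \<in> D" "c' \<noteq> e'" "d_H n D = card {j. j < n \<and> c' j \<noteq> e' j}"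
proof -
  have "d_H n D \<in> {card {j. j < n \<and> c j \<noteq> e j} | c e. c \<in> D \<and> e \<in> D \<and> c \<noteq> e}"
    unfolding d_H_def by (rule Min_in) (use assms in \<open>auto intro: finite_pairs_image\<close>)
  then show ?thesis
    using that by blast
qed

lemma d_SR_le:
  "finite C \<Longrightarrow> c \<in> C \<Longrightarrow> e \<in> C \<Longrightarrow> c \<noteq> e \<Longrightarrow> d_SR h \<alpha> ns C \<le> wt_SR h \<alpha> ns (\<lambda>j. c j - e j)"
  unfolding d_SR_def by (rule Min_le) (auto intro: finite_pairs_image)

lemma d_SR_attained:
  assumes "finite C" "c \<in> C" "e \<in> C" "c \<noteq> e"
  obtains c' e' where "c' \<in> C" "e' \<in> C" "c' \<noteq> e'" "d_SR h \<alpha> ns C = wt_SR h \<alpha> ns (\<lambda>j. c' j - e' j)"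
proof -
  have "d_SR h \<alpha> ns C \<in> {wt_SR h \<alpha> ns (\<lambda>j. c j - e j) | c e. c \<in> C \<and> e \<in> C \<and> c \<noteq> e}"
    unfolding d_SR_def by (rule Min_in) (use assms in \<open>auto intro: finite_pairs_image\<close>)
  then show ?thesis
    using that by blast
qed

lemma card_neq_eq_wt_H_diff:
  fixes c e :: "nat \<Rightarrow> 'a::ab_group_add"
  shows "card {j. j < n \<and> c j \<noteq> e j} = wt_H n (\<lambda>j. c j - e j)"
  unfolding wt_H_def by simp

abbreviation code_mult_diag :: "nat list \<Rightarrow> (nat \<Rightarrow> nat \<Rightarrow> nat \<Rightarrow> 'r::comm_ring_1) \<Rightarrow>
    (nat \<Rightarrow> 'r poly) set \<Rightarrow> (nat \<Rightarrow> 'r poly) set"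
  where "code_mult_diag ns As C \<equiv> (\<lambda>c. vec_mat (sum_list ns) c (block_diag ns As)) ` C"

lemma Sn_diff_in_S_set:
  "c \<in> Sn h n \<Longrightarrow> e \<in> Sn h n \<Longrightarrow> t < n \<Longrightarrow> c t - e t \<in> S_set h"
  unfolding Sn_def by (simp add: S_set_diff)

lemma code_mult_diag_subset_Sn:
  assumes d: "0 < degree h" and C: "C \<subseteq> Sn h (sum_list ns)"
  shows "code_mult_diag ns As C \<subseteq> Sn h (sum_list ns)"
proof
  fix x
  assume "x \<in> code_mult_diag ns As C"
  then obtain c where c: "c \<in> C" "x = vec_mat (sum_list ns) c (block_diag ns As)"
    by blast
  have "\<And>t. t < sum_list ns \<Longrightarrow> c t \<in> S_set h"
    using c(1) C unfolding Sn_def by blast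
  then have "x j \<in> S_set h" for j
    unfolding c(2) by (rule vec_mat_in_S_set[OF d])
  moreover have "x j = 0" if "sum_list ns \<le> j" for j
    using that unfolding c(2) vec_mat_def by simp
  ultimately show "x \<in> Sn h (sum_list ns)"
    unfolding Sn_def by blast
qed

lemma card_code_mult_diag:
  "inv_blocks ns As \<Longrightarrow> C \<subseteq> Sn h (sum_list ns) \<Longrightarrow> card (code_mult_diag ns As C) = card C"
  by (rule card_image) (use inj_on_vec_mat_block_diag inj_on_subset in blast)

lemma d_SR_le_d_H_code_mult_diag:
  fixes h :: "'r::comm_ring_1 poly"
  assumes cr: "chain_ring TYPE('r)" and B: "is_R_basis h \<alpha>" and d: "0 < degree h"
    and C: "C \<subseteq> Sn h (sum_list ns)" "finite C" "c \<in> C" "e \<in> C" "c \<noteq> e"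
    and As: "inv_blocks ns As"
  shows "d_SR h \<alpha> ns C \<le> d_H (sum_list ns) (code_mult_diag ns As C)"
proof -
  let ?f = "\<lambda>c. vec_mat (sum_list ns) c (block_diag ns As)"
  have inj: "inj_on ?f C"
    using inj_on_vec_mat_block_diag[OF As] C(1) by (rule inj_on_subset)
  have "finite (code_mult_diag ns As C)" "?f c \<in> code_mult_diag ns As C" "?f e \<in> code_mult_diag ns As C"
    using C by auto
  moreover have "?f c \<noteq> ?f e"
    using inj_on_contraD[OF inj C(5,3,4)] .
  ultimately obtain x y where xy: "x \<in> code_mult_diag ns As C" "y \<in> code_mult_diag ns As C" "x \<noteq> y"
    and dH: "d_H (sum_list ns) (code_mult_diag ns As C) = card {j. j < sum_list ns \<and> x j \<noteq> y j}"
    by (rule d_H_attained)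
  then obtain c' e' where c'e': "c' \<in> C" "e' \<in> C" "x = ?f c'" "y = ?f e'"
    by blast
  then have "c' \<noteq> e'"
    using xy(3) by blast
  have diff: "\<And>t. t < sum_list ns \<Longrightarrow> c' t - e' t \<in> S_set h"
    using c'e' C(1) Sn_diff_in_S_set by blast
  have "d_SR h \<alpha> ns C \<le> wt_SR h \<alpha> ns (\<lambda>j. c' j - e' j)"
    by (rule d_SR_le[OF C(2) c'e'(1,2) \<open>c' \<noteq> e'\<close>])
  also have "\<dots> = wt_SR h \<alpha> ns (?f (\<lambda>j. c' j - e' j))"
    by (rule wt_SR_vec_mat_block_diag[OF B d As, where c = "\<lambda>j. c' j - e' j", OF diff, symmetric])
  also have "\<dots> \<le> wt_H (sum_list ns) (?f (\<lambda>j. c' j - e' j))"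
  proof (rule wt_SR_le_wt_H[OF cr B])
    show "?f (\<lambda>j. c' j - e' j) t \<in> S_set h" for t
      by (rule vec_mat_in_S_set[OF d]) (use diff in simp)
  qed
  also have "\<dots> = d_H (sum_list ns) (code_mult_diag ns As C)"
    unfolding dH c'e'(3,4) card_neq_eq_wt_H_diff vec_mat_diff ..
  finally show ?thesis .
qed

lemma ex_code_mult_diag_d_H_le_d_SR:
  fixes h :: "'r::comm_ring_1 poly"
  assumes cr: "chain_ring TYPE('r)" and B: "is_R_basis h \<alpha>" and d: "0 < degree h"
    and C: "C \<subseteq> Sn h (sum_list ns)" "finite C" "c \<in> C" "e \<in> C" "c \<noteq> e"
  shows "\<exists>As. inv_blocks ns As \<and> d_H (sum_list ns) (code_mult_diag ns As C) \<le> d_SR h \<alpha> ns C"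
proof -
  obtain c' e' where c'e': "c' \<in> C" "e' \<in> C" "c' \<noteq> e'"
    and dSR: "d_SR h \<alpha> ns C = wt_SR h \<alpha> ns (\<lambda>j. c' j - e' j)"
    using d_SR_attained[OF C(2-5)] by blast
  have diff: "\<And>t. t < sum_list ns \<Longrightarrow> c' t - e' t \<in> S_set h"
    using c'e' C(1) Sn_diff_in_S_set by blast
  obtain As where As: "inv_blocks ns As"
    and le: "wt_H (sum_list ns) (vec_mat (sum_list ns) (\<lambda>j. c' j - e' j) (block_diag ns As))
      \<le> wt_SR h \<alpha> ns (\<lambda>j. c' j - e' j)"
    using ex_block_diag_wt_H_le_wt_SR[OF cr B d, where c = "\<lambda>j. c' j - e' j", OF diff] by blast
  let ?f = "\<lambda>c. vec_mat (sum_list ns) c (block_diag ns As)"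
  have "?f c' \<noteq> ?f e'"
    using inj_on_contraD[OF inj_on_vec_mat_block_diag[OF As] c'e'(3)] C(1) c'e'(1,2) by blast
  then have "d_H (sum_list ns) (code_mult_diag ns As C) \<le> card {j. j < sum_list ns \<and> ?f c' j \<noteq> ?f e' j}"
    using C(2) c'e' by (intro d_H_le) auto
  also have "\<dots> \<le> d_SR h \<alpha> ns C"
    unfolding card_neq_eq_wt_H_diff vec_mat_diff dSR by (rule le)
  finally show ?thesis
    using As by blast
qed

lemma code_of_card_power:
  assumes D: "D \<subseteq> Sn h n" "card D = card (S_set h) ^ k" and S: "2 \<le> card (S_set h)" and k: "0 < k"
  shows "finite (S_set h)" "0 < degree h" "finite D" "\<exists>c\<in>D. \<exists>e\<in>D. c \<noteq> e"
proof -
  show "finite (S_set h)"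
    using S by (intro card_ge_0_finite) simp
  have "S_set h \<noteq> {}"
    using S by auto
  then show "0 < degree h"
    unfolding S_set_def by auto
  have "card (S_set h) \<le> card D"
    unfolding D(2) using S k by (intro self_le_power) simp_all
  then have D_fin: "finite D" and "\<not> card D \<le> Suc 0"
    using S by (auto intro: card_ge_0_finite)
  then show "finite D" "\<exists>c\<in>D. \<exists>e\<in>D. c \<noteq> e"
    using card_le_Suc0_iff_eq[OF D_fin] by blast+
qed

lemma singleton_bound:
  assumes D: "D \<subseteq> Sn h n" "card D = card (S_set h) ^ k" and S: "2 \<le> card (S_set h)" and k: "0 < k"
  shows "k \<le> n \<and> d_H n D \<le> n + 1 - k"
proof -
  note D_props = code_of_card_power[OF D S k]
  let ?S = "S_set h" and ?g = "\<lambda>c::nat \<Rightarrow> _. map c [0..<k - 1]"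
  have entries: "c j \<in> ?S" if "c \<in> D" for c j
    using that D(1) S_set_zero[OF D_props(2)] unfolding Sn_def by (cases "j < n") auto
  have "?g ` D \<subseteq> {xs. set xs \<subseteq> ?S \<and> length xs = k - 1}"
    using entries by auto
  then have "card (?g ` D) \<le> card {xs. set xs \<subseteq> ?S \<and> length xs = k - 1}"
    by (rule card_mono[OF finite_lists_length_eq[OF D_props(1)]])
  also have "\<dots> = card ?S ^ (k - 1)"
    by (rule card_lists_length_eq[OF D_props(1)])
  also have "\<dots> < card D"
    unfolding D(2) using S k by (intro power_strict_increasing) auto
  finally have "\<not> inj_on ?g D"
    by (auto dest: card_image)
  then obtain c e where ce: "c \<in> D" "e \<in> D" "c \<noteq> e" "?g c = ?g e"
    unfolding inj_on_def by blast
  then have agree: "c j = e j" if "j < k - 1" for j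
    using that by (simp add: map_eq_conv)
  have "k \<le> n"
  proof (rule ccontr)
    assume "\<not> k \<le> n"
    moreover have "c \<in> Sn h n" "e \<in> Sn h n"
      using ce(1,2) D(1) by auto
    ultimately have "c j = e j" for j
      using agree unfolding Sn_def by (cases "j < n") auto
    then show False
      using ce(3) by auto
  qed
  moreover have "{j. j < n \<and> c j \<noteq> e j} \<subseteq> {k - 1..<n}"
    using agree by (auto simp: not_less[symmetric])
  then have "card {j. j < n \<and> c j \<noteq> e j} \<le> card {k - 1..<n}"
    by (rule card_mono[rotated]) simp
  then have "card {j. j < n \<and> c j \<noteq> e j} \<le> n + 1 - k"
    using k by simp
  ultimately show ?thesis
    using d_H_le[OF D_props(3) ce(1-3), of n] by simp
qed

lemma power_eq_if_log_eq:
  fixes b x k :: nat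
  assumes log: "log b x = real k" and k: "0 < k"
  shows "2 \<le> b \<and> x = b ^ k"
proof -
  have "b \<noteq> 0" "b \<noteq> 1" "x \<noteq> 0"
  proof -
    have degenerate: "log b x = 0" if "b = 0 \<or> b = 1 \<or> x = 0"
      using that by (auto simp: log_def)
    have "log b x \<noteq> 0"
      using log k by simp
    then show "b \<noteq> 0" "b \<noteq> 1" "x \<noteq> 0"
      using degenerate by (metis, metis, metis)
  qed
  then have "real x = real b powr log b x"
    by simp
  also have "\<dots> = real (b ^ k)"
    using \<open>b \<noteq> 0\<close> log by (simp add: powr_realpow)
  finally show ?thesis
    using \<open>b \<noteq> 0\<close> \<open>b \<noteq> 1\<close> by (simp only: of_nat_eq_iff) linarith
qed

lemma is_MDS_iff:
  assumes D: "D \<subseteq> Sn h n" "card D = card (S_set h) ^ k" and S: "2 \<le> card (S_set h)" and k: "0 < k"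
  shows "is_MDS h n D \<longleftrightarrow> d_H n D = n + 1 - k"
proof -
  have "log (card (S_set h)) (card D) = k"
    using D(2) S by (simp add: log_nat_power)
  moreover have "real n - real k + 1 = real (n + 1 - k)"
    using singleton_bound[OF D S k] by (simp add: of_nat_diff)
  ultimately show ?thesis
    unfolding is_MDS_def by (simp only: of_nat_eq_iff)
qed

lemma is_MSRD_iff:
  assumes "log (card (S_set h)) (card C) = real k" "0 < k" "k \<le> sum_list ns"
  shows "is_MSRD h \<alpha> ns C \<longleftrightarrow> d_SR h \<alpha> ns C = sum_list ns + 1 - k"
  unfolding is_MSRD_def using assms by auto

lemma d_SR_eq_iff_all_d_H_eq:
  fixes h :: "'r::comm_ring_1 poly"
  assumes cr: "chain_ring TYPE('r)" and B: "is_R_basis h \<alpha>"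
    and C: "C \<subseteq> Sn h (sum_list ns)" "card C = card (S_set h) ^ k"
    and S: "2 \<le> card (S_set h)" and k: "0 < k"
  shows "d_SR h \<alpha> ns C = sum_list ns + 1 - k \<longleftrightarrow>
    (\<forall>As. inv_blocks ns As \<longrightarrow> d_H (sum_list ns) (code_mult_diag ns As C) = sum_list ns + 1 - k)"
proof -
  let ?n = "sum_list ns"
  note C_props = code_of_card_power[OF C S k]
  obtain c e where ce: "c \<in> C" "e \<in> C" "c \<noteq> e"
    using C_props(4) by blast
  have lower: "d_SR h \<alpha> ns C \<le> d_H ?n (code_mult_diag ns As C)"
    and upper: "d_H ?n (code_mult_diag ns As C) \<le> ?n + 1 - k"
    if As: "inv_blocks ns As" for As :: "nat \<Rightarrow> nat \<Rightarrow> nat \<Rightarrow> 'r"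
  proof -
    show "d_SR h \<alpha> ns C \<le> d_H ?n (code_mult_diag ns As C)"
      by (rule d_SR_le_d_H_code_mult_diag[OF cr B C_props(2) C(1) C_props(3) ce As])
    have "card (code_mult_diag ns As C) = card (S_set h) ^ k"
      using card_code_mult_diag[OF As C(1)] C(2) by simp
    then show "d_H ?n (code_mult_diag ns As C) \<le> ?n + 1 - k"
      using singleton_bound[OF code_mult_diag_subset_Sn[OF C_props(2) C(1)] _ S k] by blast
  qed
  obtain A where A: "inv_blocks ns A" "d_H ?n (code_mult_diag ns A C) \<le> d_SR h \<alpha> ns C"
    using ex_code_mult_diag_d_H_le_d_SR[OF cr B C_props(2) C(1) C_props(3) ce] by blast
  have one: "inv_blocks ns (\<lambda>_. fmat_one)"
    by (simp add: inv_mat_fmat_one)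
  show ?thesis
  proof (intro iffI allI impI)
    fix As :: "nat \<Rightarrow> nat \<Rightarrow> nat \<Rightarrow> 'r"
    assume "d_SR h \<alpha> ns C = ?n + 1 - k" and As: "inv_blocks ns As"
    then show "d_H ?n (code_mult_diag ns As C) = ?n + 1 - k"
      using lower[OF As] upper[OF As] by simp
  next
    assume all_eq: "\<forall>As. inv_blocks ns As \<longrightarrow> d_H ?n (code_mult_diag ns As C) = ?n + 1 - k"
    then have "d_H ?n (code_mult_diag ns A C) = ?n + 1 - k"
      "d_H ?n (code_mult_diag ns (\<lambda>_. fmat_one) C) = ?n + 1 - k"
      using mp[OF spec[OF all_eq, of A] A(1)] mp[OF spec[OF all_eq, of "\<lambda>_. fmat_one"] one] by simp_all
    then show "d_SR h \<alpha> ns C = ?n + 1 - k"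
      using A(2) lower[OF one] by simp
  qed
qed

theorem lemma3:
  fixes h :: "'r::{comm_ring_1, finite} poly"
    and \<alpha> :: "nat \<Rightarrow> 'r poly"
    and ns :: "nat list"
    and C :: "(nat \<Rightarrow> 'r poly) set"
  assumes "chain_ring TYPE('r)"
    and "lead_coeff h = 1"
    and "irred_mod_m h"
    and "is_R_basis h \<alpha>"
    and "C \<subseteq> Sn h (sum_list ns)"
    and "\<exists>k::nat. k > 0 \<and> log (card (S_set h)) (card C) = real k"
  shows "is_MSRD h \<alpha> ns C \<longleftrightarrow>
    (\<forall>As. (\<forall>i<length ns. inv_mat (ns ! i) (As i)) \<longrightarrow>
       is_MDS h (sum_list ns)
         ((\<lambda>c. vec_mat (sum_list ns) c (block_diag ns As)) ` C))"
proof -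
  let ?n = "sum_list ns" and ?S = "S_set h"
  obtain k where k: "0 < k" "log (card ?S) (card C) = real k"
    using assms(6) by blast
  then have S: "2 \<le> card ?S" and card_C: "card C = card ?S ^ k"
    using power_eq_if_log_eq[OF k(2,1)] by simp_all
  have "0 < degree h"
    using code_of_card_power[OF assms(5) card_C S k(1)] by blast
  have "is_MDS h ?n (code_mult_diag ns As C) \<longleftrightarrow> d_H ?n (code_mult_diag ns As C) = ?n + 1 - k"
    if "inv_blocks ns As" for As :: "nat \<Rightarrow> nat \<Rightarrow> nat \<Rightarrow> 'r"
    using is_MDS_iff[OF code_mult_diag_subset_Sn[OF \<open>0 < degree h\<close> assms(5)] _ S k(1)]
      card_code_mult_diag[OF that assms(5)] card_C by simp
  moreover have "k \<le> ?n"
    using singleton_bound[OF assms(5) card_C S k(1)] by blast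
  ultimately show ?thesis
    unfolding is_MSRD_iff[OF k(2,1) \<open>k \<le> ?n\<close>] d_SR_eq_iff_all_d_H_eq[OF assms(1,4,5) card_C S k(1)]
    by simp
qed

end
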